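(* Either let all graphs below be undirected, or let all be directed. Let $D_0$ be a graph on $k$ vertices $v_1,\dots,v_k$ and let $D_1,\dots,D_k$ be graphs; let $f_i=f(D_i)$ and $n_i=n(D_i)$ for $0\le i\le k$, and for each $0\leq i\leq k$ let $R_i$ be a nonempty bad set of $D_i$. Let $D$ be obtained from the disjoint union of $D_1,\dots,D_k$ by adding, for every arc (resp. edge) $v_iv_j$ of $D_0$, all arcs from every vertex of $R_i\subseteq V(D_i)$ to every vertex of $R_j\subseteq V(D_j)$ (resp. all edges between $R_i$ and $R_j$). Then: \begin{enumerate} \item $n(D)=n_1+\dots+n_k$ and $f(D)\geq f_0+f_1+\dots+f_k$; \item if $R_i$ is an inclusion-wise minimal bad set of $D_i$ for every $1\leq i\leq k$, then $f(D)=\sum_{0\le i\le k} f_i$ and $R=\bigcup_{v_i\in R_0}R_i$ is a bad set of $D$; \item if moreover $R_1,\dots,R_k$ are cliques of size at most $c$, the underlying graphs of $D_1,\dots,D_k$ are chordal and have treewidth at most $t$, and $D_0$ has treewidth at most $t_0$, then $D$ has treewidth at most $\max\bigl(t,\,c(t_0+1)-1\bigr)$. \end{enumerate}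
   Context: Undirected graphs are finite and simple; directed graphs are oriented graphs (no loops, no multiple arcs, no antiparallel arcs). $n(H)$ is the number of vertices of $H$; $f(H)$ is the minimum size of a feedback vertex set, i.e. of a set $F\subseteq V(H)$ such that $H-F$ has no (directed, in the directed case) cycle. A set $R\subseteq V(H)$ is bad if it is not contained in any minimum feedback vertex set of $H$. A graph is chordal if it has a vertex ordering in which, for every vertex, its neighbours preceding it form a clique. A $k$-tree is a graph with a vertex ordering $\phi$ in which, for every vertex $v$, the preceding neighbours form a clique of size exactly $\min(k,\phi(v)-1)$; a graph has treewidth at most $k$ if it is a subgraph of a $k$-tree. Treewidth and cliques of a directed graph refer to its underlying undirected graph. *)

theory Defs
  imports Main
begin

(* A graph is given by a vertex set V and an edge/arc relation E.
   dir = False: undirected simple graph (E symmetric, irreflexive);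
   dir = True : oriented graph (E irreflexive, no antiparallel arcs). *)
definition graph :: "bool \<Rightarrow> 'a set \<Rightarrow> ('a \<times> 'a) set \<Rightarrow> bool" where
  "graph dir V E \<longleftrightarrow> finite V \<and> E \<subseteq> V \<times> V \<and> (\<forall>x. (x, x) \<notin> E) \<and>
     (if dir then (\<forall>x y. (x, y) \<in> E \<longrightarrow> (y, x) \<notin> E) else sym E)"

definition has_cycle :: "bool \<Rightarrow> 'a set \<Rightarrow> ('a \<times> 'a) set \<Rightarrow> bool" where
  "has_cycle dir V E \<longleftrightarrow> (\<exists>xs. distinct xs \<and> set xs \<subseteq> V \<and>
     length xs \<ge> (if dir then 2 else 3) \<and>
     (\<forall>i < length xs. (xs ! i, xs ! ((i + 1) mod length xs)) \<in> E))"

definition fvs :: "bool \<Rightarrow> 'a set \<Rightarrow> ('a \<times> 'a) set \<Rightarrow> 'a set \<Rightarrow> bool" where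
  "fvs dir V E F \<longleftrightarrow> F \<subseteq> V \<and> \<not> has_cycle dir (V - F) E"

definition fvn :: "bool \<Rightarrow> 'a set \<Rightarrow> ('a \<times> 'a) set \<Rightarrow> nat" where
  "fvn dir V E = Min {card F | F. fvs dir V E F}"

definition min_fvs :: "bool \<Rightarrow> 'a set \<Rightarrow> ('a \<times> 'a) set \<Rightarrow> 'a set \<Rightarrow> bool" where
  "min_fvs dir V E F \<longleftrightarrow> fvs dir V E F \<and> card F = fvn dir V E"

definition bad :: "bool \<Rightarrow> 'a set \<Rightarrow> ('a \<times> 'a) set \<Rightarrow> 'a set \<Rightarrow> bool" where
  "bad dir V E R \<longleftrightarrow> R \<subseteq> V \<and> \<not> (\<exists>F. min_fvs dir V E F \<and> R \<subseteq> F)"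

definition min_bad :: "bool \<Rightarrow> 'a set \<Rightarrow> ('a \<times> 'a) set \<Rightarrow> 'a set \<Rightarrow> bool" where
  "min_bad dir V E R \<longleftrightarrow> bad dir V E R \<and> (\<forall>S. S \<subset> R \<longrightarrow> \<not> bad dir V E S)"

definition und :: "('a \<times> 'a) set \<Rightarrow> ('a \<times> 'a) set" where
  "und E = E \<union> E\<inverse>"

definition clique :: "('a \<times> 'a) set \<Rightarrow> 'a set \<Rightarrow> bool" where
  "clique E S \<longleftrightarrow> (\<forall>x\<in>S. \<forall>y\<in>S. x \<noteq> y \<longrightarrow> (x, y) \<in> E)"

definition prec_nbrs :: "('a \<times> 'a) set \<Rightarrow> 'a list \<Rightarrow> nat \<Rightarrow> 'a set" where
  "prec_nbrs E xs i = {xs ! j | j. j < i \<and> (xs ! j, xs ! i) \<in> E}"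

definition chordal :: "'a set \<Rightarrow> ('a \<times> 'a) set \<Rightarrow> bool" where
  "chordal V E \<longleftrightarrow> (\<exists>xs. distinct xs \<and> set xs = V \<and>
     (\<forall>i < length xs. clique E (prec_nbrs E xs i)))"

(* k-tree; position i (0-based) corresponds to phi(v) - 1 *)
definition ktree :: "nat \<Rightarrow> 'a set \<Rightarrow> ('a \<times> 'a) set \<Rightarrow> bool" where
  "ktree k V E \<longleftrightarrow> graph False V E \<and> (\<exists>xs. distinct xs \<and> set xs = V \<and>
     (\<forall>i < length xs. clique E (prec_nbrs E xs i) \<and> card (prec_nbrs E xs i) = min k i))"

definition tw_le :: "nat \<Rightarrow> 'a set \<Rightarrow> ('a \<times> 'a) set \<Rightarrow> bool" where
  "tw_le k V E \<longleftrightarrow> (\<exists>W E'. V \<subseteq> W \<and> ktree k W E' \<and> E \<subseteq> E')"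

(* the composed graph D: vertices (i, x) with i in V(D_0), x in V(D_i) *)
definition comp_V :: "'i set \<Rightarrow> ('i \<Rightarrow> 'a set) \<Rightarrow> ('i \<times> 'a) set" where
  "comp_V I V = Sigma I V"

definition comp_E :: "'i set \<Rightarrow> ('i \<times> 'i) set \<Rightarrow> ('i \<Rightarrow> ('a \<times> 'a) set) \<Rightarrow> ('i \<Rightarrow> 'a set)
     \<Rightarrow> (('i \<times> 'a) \<times> ('i \<times> 'a)) set" where
  "comp_E I E0 E R =
     {((i, x), (i, y)) | i x y. i \<in> I \<and> (x, y) \<in> E i} \<union>
     {((i, x), (j, y)) | i j x y. (i, j) \<in> E0 \<and> x \<in> R i \<and> y \<in> R j}"

end

(*
  A feedback vertex set F of D splits into fibres F `` {i}, each a feedback vertex set of D_i.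
  Where the fibre is a minimum one it misses a vertex r_i of the bad set R_i, and the vertices
  (i, r_i) carry a copy of D_0 on these indices; so the remaining indices form a feedback vertex
  set of D_0, each costing one extra vertex, and |F| >= f_0 + sum f_i. If F is minimum and
  contains R_i for all i in R_0, the remaining indices form a minimum feedback vertex set of D_0,
  which by badness of R_0 misses some i in R_0, whose fibre then contradicts badness of R_i.

  Conversely, if R_i is minimally bad, some minimum feedback vertex set G_i of D_i contains all
  of R_i but one vertex r_i. Deleting all G_i, and r_i for i in a minimum feedback vertex set of
  D_0, leaves at most one vertex (i, r_i) per fibre with edges to other fibres. A cycle through
  two fibres must enter and leave each fibre there, so it is a cycle of D_0; any other cycle lies
  in one fibre.

  For the treewidth, rank the vertices of all R_i first, ordered along an elimination ordering of
  width t_0 of D_0, and then each fibre along a perfect elimination ordering of D_i starting with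
  the clique R_i. A vertex of R_i then has its earlier neighbours in R_i and in the R_j of at most
  t_0 earlier neighbours j of i, a clique of at most c (t_0 + 1) - 1 vertices; any other vertex
  has them in its own fibre, a clique of D_i of size at most t.
*)

theory Submission
  imports Defs "HOL-Library.Product_Lexorder"
begin

section \<open>Cycles\<close>

definition is_cycle :: "bool \<Rightarrow> 'a set \<Rightarrow> ('a \<times> 'a) set \<Rightarrow> 'a list \<Rightarrow> bool" where
  "is_cycle dir A E xs \<longleftrightarrow> distinct xs \<and> set xs \<subseteq> A \<and> length xs \<ge> (if dir then 2 else 3) \<and>
     (\<forall>i < length xs. (xs ! i, xs ! ((i + 1) mod length xs)) \<in> E)"

lemma has_cycle_iff: "has_cycle dir A E \<longleftrightarrow> (\<exists>xs. is_cycle dir A E xs)"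
  unfolding has_cycle_def is_cycle_def ..

lemma nth_next_mem: "i < length xs \<Longrightarrow> xs ! ((i + 1) mod length xs) \<in> set xs"
  by (intro nth_mem mod_less_divisor) linarith

lemma has_cycle_mono: "has_cycle dir A E \<Longrightarrow> A \<subseteq> B \<Longrightarrow> has_cycle dir B E"
  unfolding has_cycle_def by blast

lemma is_cycle_length: "is_cycle dir A E xs \<Longrightarrow> 2 \<le> length xs"
  unfolding is_cycle_def by (auto split: if_splits)

lemma is_cycle_edge:
  assumes "is_cycle dir A E xs" "i < length xs"
  shows "xs ! i \<in> A" "xs ! ((i + 1) mod length xs) \<in> A" "(xs ! i, xs ! ((i + 1) mod length xs)) \<in> E"
proof -
  have "xs ! i \<in> set xs" "xs ! ((i + 1) mod length xs) \<in> set xs"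
    using assms(2) nth_next_mem by simp_all
  then show "xs ! i \<in> A" "xs ! ((i + 1) mod length xs) \<in> A" "(xs ! i, xs ! ((i + 1) mod length xs)) \<in> E"
    using assms unfolding is_cycle_def by blast+
qed

lemma is_cycle_next_neq:
  assumes "is_cycle dir A E xs" "i < length xs"
  shows "xs ! i \<noteq> xs ! ((i + 1) mod length xs)"
proof -
  have "2 \<le> length xs"
    by (rule is_cycle_length[OF assms(1)])
  then have "(i + 1) mod length xs \<noteq> i" "(i + 1) mod length xs < length xs"
    using assms(2) by (auto simp: mod_Suc)
  then show ?thesis
    using assms nth_eq_iff_index_eq unfolding is_cycle_def by metis
qed

lemma is_cycle_map:
  assumes "is_cycle dir A E xs" "inj_on f (set xs)" "f ` set xs \<subseteq> B"
    and "\<And>i. i < length xs \<Longrightarrow> (f (xs ! i), f (xs ! ((i + 1) mod length xs))) \<in> E'"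
  shows "is_cycle dir B E' (map f xs)"
proof -
  have "map f xs ! i = f (xs ! i)" if "i < length xs" for i
    using that by simp
  moreover have "(i + 1) mod length xs < length xs" if "i < length xs" for i
    using that by (intro mod_less_divisor) linarith
  ultimately show ?thesis
    using assms unfolding is_cycle_def by (simp add: distinct_map)
qed

lemma has_cycle_hom:
  assumes "has_cycle dir A E" "inj_on f A" "f ` A \<subseteq> B"
    and "\<And>a b. a \<in> A \<Longrightarrow> b \<in> A \<Longrightarrow> (a, b) \<in> E \<Longrightarrow> (f a, f b) \<in> E'"
  shows "has_cycle dir B E'"
proof -
  obtain xs where xs: "is_cycle dir A E xs"
    using assms(1) has_cycle_iff by blast
  have "set xs \<subseteq> A"
    using xs unfolding is_cycle_def by blast
  then have "inj_on f (set xs)" "f ` set xs \<subseteq> B"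
    using assms(2,3) inj_on_subset by blast+
  moreover have "(f (xs ! i), f (xs ! ((i + 1) mod length xs))) \<in> E'" if "i < length xs" for i
    using assms(4) is_cycle_edge[OF xs that] by blast
  ultimately have "is_cycle dir B E' (map f xs)"
    by (rule is_cycle_map[OF xs])
  then show ?thesis
    using has_cycle_iff by blast
qed

lemma is_cycle_rotate:
  assumes "is_cycle dir A E xs"
  shows "is_cycle dir A E (rotate m xs)"
proof -
  let ?n = "length xs"
  have n: "0 < ?n"
    using is_cycle_length[OF assms] by linarith
  have "(rotate m xs ! i, rotate m xs ! ((i + 1) mod ?n)) \<in> E" if "i < ?n" for i
  proof -
    let ?j = "(m + i) mod ?n"
    have "rotate m xs ! i = xs ! ?j"
      using that by (simp add: nth_rotate)
    moreover have "rotate m xs ! ((i + 1) mod ?n) = xs ! ((?j + 1) mod ?n)"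
      using n by (simp add: nth_rotate mod_simps add.assoc)
    ultimately show ?thesis
      using is_cycle_edge(3)[OF assms, of ?j] n by simp
  qed
  then show ?thesis
    using assms unfolding is_cycle_def by simp
qed

context
  fixes A :: "'a set" and E :: "('a \<times> 'a) set" and g :: "'a \<Rightarrow> 'b" and Q :: "'a \<Rightarrow> bool"
  assumes cross: "\<And>a b. a \<in> A \<Longrightarrow> b \<in> A \<Longrightarrow> (a, b) \<in> E \<Longrightarrow> g a \<noteq> g b \<Longrightarrow> Q a \<and> Q b"
    and unique: "\<And>a b. a \<in> A \<Longrightarrow> b \<in> A \<Longrightarrow> Q a \<Longrightarrow> Q b \<Longrightarrow> g a = g b \<Longrightarrow> a = b"
begin

lemma is_cycle_leaves_port:
  assumes cyc: "is_cycle dir A E ys" and last: "g (ys ! (length ys - 1)) \<noteq> g (ys ! 0)"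
    and m: "m < length ys" "Q (ys ! m)"
  shows "g (ys ! m) \<noteq> g (ys ! ((m + 1) mod length ys))"
proof
  assume stuck: "g (ys ! m) = g (ys ! ((m + 1) mod length ys))"
  let ?n = "length ys"
  define C where "C j \<longleftrightarrow> g (ys ! j) \<noteq> g (ys ! ((j + 1) mod ?n))" for j
  define l where "l = (LEAST l. m \<le> l \<and> l < ?n \<and> C l)"
  have "Suc (?n - 1) = ?n" "m \<le> ?n - 1"
    using is_cycle_length[OF cyc] m(1) by linarith+
  then have "m \<le> ?n - 1 \<and> ?n - 1 < ?n \<and> C (?n - 1)"
    using last unfolding C_def by simp
  then have "m \<le> l \<and> l < ?n \<and> C l"
    unfolding l_def by (rule LeastI)
  then have l: "m \<le> l" "l < ?n" "C l"
    by auto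
  have stay: "g (ys ! j) = g (ys ! m)" if "m \<le> j" "j \<le> l" for j
    using that
  proof (induction j)
    case (Suc j)
    show ?case
    proof (cases "m = Suc j")
      case False
      then have j: "m \<le> j" "j < l"
        using Suc.prems by auto
      then have "\<not> C j"
        using not_less_Least[of j "\<lambda>l. m \<le> l \<and> l < ?n \<and> C l"] l(2) unfolding l_def by auto
      moreover have "(j + 1) mod ?n = Suc j"
        using j(2) l(2) by simp
      ultimately show ?thesis
        using Suc.IH j unfolding C_def by simp
    qed simp
  qed simp
  have "Q (ys ! l)"
    using cross is_cycle_edge[OF cyc l(2)] l(3) unfolding C_def by blast
  then have "ys ! l = ys ! m"
    using unique is_cycle_edge(1)[OF cyc] l(2) m stay[OF l(1) order_refl] by blast
  then have "l = m"
    using cyc l(2) m(1) nth_eq_iff_index_eq unfolding is_cycle_def by blast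
  then show False
    using l(3) stuck unfolding C_def by simp
qed

text \<open>A cycle that changes the value of \<open>g\<close> somewhere enters each class of \<open>g\<close> at its unique
  \<open>Q\<close>-vertex and has to leave it from there at once, so all its vertices satisfy \<open>Q\<close>.\<close>
lemma is_cycle_all_ports:
  assumes cyc: "is_cycle dir A E ys" and last: "g (ys ! (length ys - 1)) \<noteq> g (ys ! 0)"
  shows "\<forall>y\<in>set ys. Q y"
proof -
  let ?n = "length ys"
  have ports: "Q (ys ! ((m + 1) mod ?n))" if "m < ?n" "g (ys ! m) \<noteq> g (ys ! ((m + 1) mod ?n))" for m
    using cross is_cycle_edge[OF cyc that(1)] that(2) by blast
  have "Q (ys ! m)" if "m < ?n" for m
    using that
  proof (induction m)
    case 0
    have "Suc (?n - 1) = ?n" "?n - 1 < ?n"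
      using is_cycle_length[OF cyc] by linarith+
    then show ?case
      using ports[of "?n - 1"] last by simp
  next
    case (Suc m)
    then have "(m + 1) mod ?n = Suc m"
      by simp
    then show ?case
      using ports[of m] is_cycle_leaves_port[OF cyc last, of m] Suc by simp
  qed
  then show ?thesis
    by (simp add: all_set_conv_all_nth)
qed

lemma is_cycle_one_fibre_or_ports:
  assumes cyc: "is_cycle dir A E xs"
  shows "(\<forall>x\<in>set xs. g x = g (xs ! 0)) \<or> (\<forall>x\<in>set xs. Q x)"
proof (cases "\<forall>m < length xs. g (xs ! m) = g (xs ! ((m + 1) mod length xs))")
  case True
  have "g (xs ! m) = g (xs ! 0)" if "m < length xs" for m
    using that
  proof (induction m)
    case (Suc m)
    then have "(m + 1) mod length xs = Suc m"
      by simp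
    then show ?case
      using True Suc by (metis Suc_lessD)
  qed simp
  then show ?thesis
    by (simp add: all_set_conv_all_nth)
next
  case False
  then obtain k where k: "k < length xs" "g (xs ! k) \<noteq> g (xs ! ((k + 1) mod length xs))"
    by blast
  let ?ys = "rotate (Suc k) xs"
  have n: "0 < length xs"
    using k(1) by linarith
  have "Suc k + (length xs - 1) = k + length xs"
    using n by linarith
  then have "?ys ! (length ?ys - 1) = xs ! k"
    using k(1) n nth_rotate[of "length xs - 1" xs "Suc k"] by (simp del: rotate_Suc)
  moreover have "?ys ! 0 = xs ! ((k + 1) mod length xs)"
    using n nth_rotate[of 0 xs "Suc k"] by (simp del: rotate_Suc)
  ultimately have "\<forall>y\<in>set ?ys. Q y"
    using is_cycle_all_ports[OF is_cycle_rotate[OF cyc, of "Suc k"]] k(2) by (simp del: rotate_Suc)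
  then show ?thesis
    by simp
qed

end

section \<open>Feedback vertex sets of the composition\<close>

lemma finite_fvs_cards:
  assumes "finite V"
  shows "finite {card F | F. fvs dir V E F}"
proof (rule finite_subset)
  show "{card F | F. fvs dir V E F} \<subseteq> card ` Pow V"
    unfolding fvs_def by blast
  show "finite (card ` Pow V)"
    using assms by simp
qed

lemma fvn_le: "finite V \<Longrightarrow> fvs dir V E F \<Longrightarrow> fvn dir V E \<le> card F"
  unfolding fvn_def using finite_fvs_cards by (intro Min_le) blast+

lemma min_fvs_exists:
  assumes "finite V"
  obtains F where "min_fvs dir V E F"
proof -
  have "fvs dir V E V"
    unfolding fvs_def has_cycle_def by simp
  then have "fvn dir V E \<in> {card F | F. fvs dir V E F}"
    unfolding fvn_def using finite_fvs_cards[OF assms] by (intro Min_in) blast+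
  then obtain F where "fvs dir V E F" "card F = fvn dir V E"
    by auto
  then show ?thesis
    using that unfolding min_fvs_def by blast
qed

lemma card_eq_sum_fibres:
  assumes "finite I" "\<forall>i\<in>I. finite (V i)" "F \<subseteq> Sigma I V"
  shows "card F = (\<Sum>i\<in>I. card (F `` {i}))"
proof -
  have "finite (F `` {i})" if "i \<in> I" for i
    using assms(2,3) that finite_subset[of "F `` {i}" "V i"] by blast
  then have "card (Sigma I (\<lambda>i. F `` {i})) = (\<Sum>i\<in>I. card (F `` {i}))"
    using assms(1) by (simp add: card_SigmaI)
  moreover have "Sigma I (\<lambda>i. F `` {i}) = F"
    using assms(3) by blast
  ultimately show ?thesis
    by simp
qed

lemma fvs_comp_fibre:
  assumes "fvs dir (Sigma I V) (comp_E I E0 E R) F" "i \<in> I"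
  shows "fvs dir (V i) (E i) (F `` {i})"
proof -
  have "\<not> has_cycle dir (V i - F `` {i}) (E i)"
  proof
    assume "has_cycle dir (V i - F `` {i}) (E i)"
    then have "has_cycle dir (Sigma I V - F) (comp_E I E0 E R)"
      by (rule has_cycle_hom[where f = "Pair i"]) (use assms(2) in \<open>auto simp: comp_E_def inj_on_def\<close>)
    then show False
      using assms(1) unfolding fvs_def by blast
  qed
  moreover have "F `` {i} \<subseteq> V i"
    using assms(1) unfolding fvs_def by blast
  ultimately show ?thesis
    unfolding fvs_def by blast
qed

lemma fvs_comp_nonoptimal:
  assumes "fvs dir (Sigma I V) (comp_E I E0 E R) F" "\<forall>i\<in>I. bad dir (V i) (E i) (R i)"
  shows "fvs dir I E0 {i \<in> I. \<not> min_fvs dir (V i) (E i) (F `` {i})}"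
proof -
  let ?S = "{i \<in> I. min_fvs dir (V i) (E i) (F `` {i})}"
  have ex: "\<forall>i\<in>?S. \<exists>r. r \<in> R i - F `` {i}"
    using assms(2) unfolding bad_def by blast
  obtain r where r: "\<forall>i\<in>?S. r i \<in> R i - F `` {i}"
    using bchoice[OF ex] by blast
  have "R i \<subseteq> V i" if "i \<in> I" for i
    using assms(2) that unfolding bad_def by blast
  then have img: "(\<lambda>i. (i, r i)) ` ?S \<subseteq> Sigma I V - F"
    using r by blast
  have edges: "((i, r i), (j, r j)) \<in> comp_E I E0 E R" if "i \<in> ?S" "j \<in> ?S" "(i, j) \<in> E0" for i j
    using r that unfolding comp_E_def by blast
  have inj: "inj_on (\<lambda>i. (i, r i)) ?S"
    by (rule inj_onI) simp
  have "\<not> has_cycle dir ?S E0"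
  proof
    assume "has_cycle dir ?S E0"
    then have "has_cycle dir (Sigma I V - F) (comp_E I E0 E R)"
      using inj img edges by (rule has_cycle_hom)
    then show False
      using assms(1) unfolding fvs_def by blast
  qed
  moreover have "I - {i \<in> I. \<not> min_fvs dir (V i) (E i) (F `` {i})} = ?S"
    by blast
  ultimately show ?thesis
    unfolding fvs_def by simp
qed

lemma card_fvs_comp_ge:
  assumes "finite I" "\<forall>i\<in>I. finite (V i)" "\<forall>i\<in>I. bad dir (V i) (E i) (R i)"
    and F: "fvs dir (Sigma I V) (comp_E I E0 E R) F"
  defines "N \<equiv> {i \<in> I. \<not> min_fvs dir (V i) (E i) (F `` {i})}"
  shows "fvs dir I E0 N" "(\<Sum>i\<in>I. fvn dir (V i) (E i)) + card N \<le> card F"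
    and "fvn dir I E0 + (\<Sum>i\<in>I. fvn dir (V i) (E i)) \<le> card F"
proof -
  show N: "fvs dir I E0 N"
    unfolding N_def using F assms(3) by (rule fvs_comp_nonoptimal)
  have "fvn dir (V i) (E i) + (if i \<in> N then 1 else 0) \<le> card (F `` {i})" if i: "i \<in> I" for i
  proof -
    have "fvs dir (V i) (E i) (F `` {i})"
      using F i by (rule fvs_comp_fibre)
    moreover from this have "fvn dir (V i) (E i) \<le> card (F `` {i})"
      using fvn_le assms(2) i by blast
    ultimately show ?thesis
      using i unfolding N_def min_fvs_def by auto
  qed
  then have "(\<Sum>i\<in>I. fvn dir (V i) (E i) + (if i \<in> N then 1 else 0)) \<le> (\<Sum>i\<in>I. card (F `` {i}))"
    by (rule sum_mono)
  moreover have "(\<Sum>i\<in>I. (if i \<in> N then 1 else 0 :: nat)) = card N"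
    using assms(1) unfolding N_def by (simp add: sum.If_cases Int_def)
  moreover have "card F = (\<Sum>i\<in>I. card (F `` {i}))"
    using assms(1,2) F unfolding fvs_def by (intro card_eq_sum_fibres) auto
  ultimately show "(\<Sum>i\<in>I. fvn dir (V i) (E i)) + card N \<le> card F"
    by (simp add: sum.distrib)
  moreover have "fvn dir I E0 \<le> card N"
    using fvn_le[OF assms(1) N] .
  ultimately show "fvn dir I E0 + (\<Sum>i\<in>I. fvn dir (V i) (E i)) \<le> card F"
    by simp
qed

lemma bad_comp:
  assumes "finite I" "\<forall>i\<in>I. finite (V i)" "\<forall>i\<in>I. bad dir (V i) (E i) (R i)" "bad dir I E0 R0"
    and tight: "fvn dir (Sigma I V) (comp_E I E0 E R) = fvn dir I E0 + (\<Sum>i\<in>I. fvn dir (V i) (E i))"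
  shows "bad dir (Sigma I V) (comp_E I E0 E R) (\<Union>i\<in>R0. {i} \<times> R i)"
  unfolding bad_def
proof (intro conjI notI)
  show "(\<Union>i\<in>R0. {i} \<times> R i) \<subseteq> Sigma I V"
    using assms(3,4) unfolding bad_def by blast
next
  assume "\<exists>F. min_fvs dir (Sigma I V) (comp_E I E0 E R) F \<and> (\<Union>i\<in>R0. {i} \<times> R i) \<subseteq> F"
  then obtain F where F: "fvs dir (Sigma I V) (comp_E I E0 E R) F"
    "card F = fvn dir I E0 + (\<Sum>i\<in>I. fvn dir (V i) (E i))" "(\<Union>i\<in>R0. {i} \<times> R i) \<subseteq> F"
    using tight unfolding min_fvs_def by auto
  let ?N = "{i \<in> I. \<not> min_fvs dir (V i) (E i) (F `` {i})}"
  note N = card_fvs_comp_ge[OF assms(1,2,3) F(1)]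
  have "card ?N \<le> fvn dir I E0"
    using N(2) F(2) by simp
  then have "min_fvs dir I E0 ?N"
    using N(1) fvn_le[OF assms(1) N(1)] unfolding min_fvs_def by simp
  then obtain i where "i \<in> R0" "i \<notin> ?N"
    using assms(4) unfolding bad_def by blast
  moreover have "R0 \<subseteq> I"
    using assms(4) unfolding bad_def by blast
  ultimately have "i \<in> I" "min_fvs dir (V i) (E i) (F `` {i})" "R i \<subseteq> F `` {i}"
    using F(3) by blast+
  then show False
    using assms(3) unfolding bad_def by blast
qed

lemma comp_E_cases:
  assumes "irrefl E0" "((i, x), (j, y)) \<in> comp_E I E0 E R"
  shows "(i = j \<and> i \<in> I \<and> (x, y) \<in> E i) \<or> (i \<noteq> j \<and> (i, j) \<in> E0 \<and> x \<in> R i \<and> y \<in> R j)"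
  using assms unfolding comp_E_def irrefl_def by auto

lemma has_cycle_comp_one_fibre:
  assumes "irrefl E0" "is_cycle dir A (comp_E I E0 E R) xs" "\<forall>x\<in>set xs. fst x = i"
  shows "has_cycle dir {y. (i, y) \<in> A} (E i)"
proof -
  have "is_cycle dir {y. (i, y) \<in> A} (E i) (map snd xs)"
  proof (rule is_cycle_map[OF assms(2)])
    show "inj_on snd (set xs)"
      using assms(3) by (intro inj_onI) (simp add: prod_eq_iff)
    show "snd ` set xs \<subseteq> {y. (i, y) \<in> A}"
    proof
      fix y assume "y \<in> snd ` set xs"
      then obtain x where "x \<in> set xs" "y = snd x"
        by blast
      then show "y \<in> {y. (i, y) \<in> A}"
        using assms(2,3) unfolding is_cycle_def by (metis mem_Collect_eq prod.collapse subsetD)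
    qed
    show "(snd (xs ! m), snd (xs ! ((m + 1) mod length xs))) \<in> E i" if "m < length xs" for m
    proof -
      have "xs ! m \<in> set xs" "xs ! ((m + 1) mod length xs) \<in> set xs"
        using that nth_next_mem by simp_all
      then show ?thesis
        using assms(3) comp_E_cases[OF assms(1)] is_cycle_edge(3)[OF assms(2) that]
        by (metis prod.collapse)
    qed
  qed
  then show ?thesis
    using has_cycle_iff by blast
qed

lemma has_cycle_comp_across:
  assumes "is_cycle dir A (comp_E I E0 E R) xs" "inj_on fst (set xs)"
  shows "has_cycle dir (fst ` set xs) E0"
proof -
  have "is_cycle dir (fst ` set xs) E0 (map fst xs)"
  proof (rule is_cycle_map[OF assms(1) assms(2) order_refl])
    show "(fst (xs ! m), fst (xs ! ((m + 1) mod length xs))) \<in> E0" if "m < length xs" for m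
    proof -
      have "xs ! m \<in> set xs" "xs ! ((m + 1) mod length xs) \<in> set xs"
        using that nth_next_mem by simp_all
      then have "fst (xs ! m) \<noteq> fst (xs ! ((m + 1) mod length xs))"
        using is_cycle_next_neq[OF assms(1) that] assms(2) unfolding inj_on_def by blast
      then show ?thesis
        using is_cycle_edge(3)[OF assms(1) that] unfolding comp_E_def by auto
    qed
  qed
  then show ?thesis
    using has_cycle_iff by blast
qed

context
  fixes I :: "'i set" and F0 :: "'i set" and V :: "'i \<Rightarrow> 'a set" and G :: "'i \<Rightarrow> 'a set"
    and R :: "'i \<Rightarrow> 'a set" and r :: "'i \<Rightarrow> 'a"
  assumes keep_one: "\<And>i. i \<in> I \<Longrightarrow> R i - {r i} \<subseteq> G i"
begin

lemma comp_E_cross_ports: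
  defines "F \<equiv> Sigma I (\<lambda>i. if i \<in> F0 then insert (r i) (G i) else G i)"
  assumes "irrefl E0" "a \<in> Sigma I V - F" "b \<in> Sigma I V - F" "(a, b) \<in> comp_E I E0 E R"
    and "fst a \<noteq> fst b"
  shows "fst a \<notin> F0 \<and> snd a = r (fst a) \<and> fst b \<notin> F0 \<and> snd b = r (fst b)"
proof -
  obtain i x j y where ab: "a = (i, x)" "b = (j, y)"
    by fastforce
  have "x \<in> R i" "y \<in> R j"
    using comp_E_cases[OF assms(2), of i x j y I E R] assms(5,6) ab by auto
  then show ?thesis
    using assms(3,4) keep_one ab unfolding F_def by (auto split: if_splits)
qed

lemma has_cycle_comp_remaining:
  defines "F \<equiv> Sigma I (\<lambda>i. if i \<in> F0 then insert (r i) (G i) else G i)"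
  assumes "irrefl E0" "has_cycle dir (Sigma I V - F) (comp_E I E0 E R)"
  shows "(\<exists>i\<in>I. has_cycle dir (V i - G i) (E i)) \<or> has_cycle dir (I - F0) E0"
proof -
  let ?A = "Sigma I V - F" and ?D = "comp_E I E0 E R"
  define Q where "Q a \<longleftrightarrow> fst a \<notin> F0 \<and> snd a = r (fst a)" for a :: "'i \<times> 'a"
  obtain xs where xs: "is_cycle dir ?A ?D xs"
    using assms(3) has_cycle_iff by blast
  have sub: "set xs \<subseteq> ?A"
    using xs unfolding is_cycle_def by blast
  have "(\<forall>x\<in>set xs. fst x = fst (xs ! 0)) \<or> (\<forall>x\<in>set xs. Q x)"
  proof (rule is_cycle_one_fibre_or_ports[OF _ _ xs])
    show "Q a \<and> Q b" if "a \<in> ?A" "b \<in> ?A" "(a, b) \<in> ?D" "fst a \<noteq> fst b" for a b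
      using comp_E_cross_ports[OF assms(2)] that unfolding Q_def F_def by blast
    show "a = b" if "a \<in> ?A" "b \<in> ?A" "Q a" "Q b" "fst a = fst b" for a b
      using that(3-5) unfolding Q_def by (simp add: prod_eq_iff)
  qed
  then show ?thesis
  proof
    assume one: "\<forall>x\<in>set xs. fst x = fst (xs ! 0)"
    let ?i = "fst (xs ! 0)"
    have "0 < length xs"
      using is_cycle_length[OF xs] by linarith
    then have "xs ! 0 \<in> ?A"
      using sub nth_mem by blast
    then have "?i \<in> I" "{y. (?i, y) \<in> ?A} \<subseteq> V ?i - G ?i"
      unfolding F_def by auto
    then show ?thesis
      using has_cycle_comp_one_fibre[OF assms(2) xs one] has_cycle_mono by blast
  next
    assume ports: "\<forall>x\<in>set xs. Q x"
    then have "inj_on fst (set xs)"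
      unfolding Q_def by (intro inj_onI) (simp add: prod_eq_iff)
    moreover have "fst ` set xs \<subseteq> I - F0"
      using ports sub unfolding Q_def by auto
    ultimately show ?thesis
      using has_cycle_comp_across[OF xs] has_cycle_mono by blast
  qed
qed

lemma fvs_comp_of_fibres:
  assumes "irrefl E0" "fvs dir I E0 F0" "\<forall>i\<in>I. fvs dir (V i) (E i) (G i) \<and> r i \<in> V i"
  shows "fvs dir (Sigma I V) (comp_E I E0 E R) (Sigma I (\<lambda>i. if i \<in> F0 then insert (r i) (G i) else G i))"
proof -
  have "\<not> has_cycle dir (Sigma I V - Sigma I (\<lambda>i. if i \<in> F0 then insert (r i) (G i) else G i))
      (comp_E I E0 E R)"
    using has_cycle_comp_remaining[OF assms(1), of dir E] assms(2,3) unfolding fvs_def by blast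
  moreover have "(if i \<in> F0 then insert (r i) (G i) else G i) \<subseteq> V i" if "i \<in> I" for i
    using assms(3) that unfolding fvs_def by auto
  ultimately show ?thesis
    unfolding fvs_def by blast
qed

end

lemma min_bad_split:
  assumes "min_bad dir V E R" "r \<in> R"
  obtains G where "min_fvs dir V E G" "R - {r} \<subseteq> G" "r \<notin> G"
proof -
  have "bad dir V E R" "\<not> bad dir V E (R - {r})"
    using assms unfolding min_bad_def by blast+
  moreover have "R - {r} \<subseteq> V"
    using \<open>bad dir V E R\<close> unfolding bad_def by blast
  ultimately obtain G where "min_fvs dir V E G" "R - {r} \<subseteq> G"
    unfolding bad_def by blast
  moreover have "r \<notin> G"
    using calculation \<open>bad dir V E R\<close> assms(2) unfolding bad_def by blast
  ultimately show ?thesis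
    using that by blast
qed

lemma card_Sigma_insert_if:
  assumes "finite I" "F0 \<subseteq> I" "\<And>i. i \<in> I \<Longrightarrow> finite (G i) \<and> r i \<notin> G i"
  shows "card (Sigma I (\<lambda>i. if i \<in> F0 then insert (r i) (G i) else G i)) = (\<Sum>i\<in>I. card (G i)) + card F0"
proof -
  have "finite (if i \<in> F0 then insert (r i) (G i) else G i)"
    "card (if i \<in> F0 then insert (r i) (G i) else G i) = card (G i) + (if i \<in> F0 then 1 else 0)"
    if "i \<in> I" for i
    using assms(3)[OF that] by simp_all
  then have "card (Sigma I (\<lambda>i. if i \<in> F0 then insert (r i) (G i) else G i)) =
      (\<Sum>i\<in>I. card (G i) + (if i \<in> F0 then 1 else 0))"
    using assms(1) by (simp add: card_SigmaI)
  moreover have "(\<Sum>i\<in>I. (if i \<in> F0 then 1 else 0 :: nat)) = card F0"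
    using assms(1,2) by (simp add: sum.If_cases Int_absorb1)
  ultimately show ?thesis
    by (simp add: sum.distrib)
qed

lemma min_bad_choice:
  assumes "\<forall>i\<in>I. R i \<noteq> {} \<and> min_bad dir (V i) (E i) (R i)"
  obtains r G where "\<And>i. i \<in> I \<Longrightarrow> r i \<in> R i" "\<And>i. i \<in> I \<Longrightarrow> min_fvs dir (V i) (E i) (G i)"
    "\<And>i. i \<in> I \<Longrightarrow> R i - {r i} \<subseteq> G i" "\<And>i. i \<in> I \<Longrightarrow> r i \<notin> G i"
proof -
  define r where "r i = (SOME x. x \<in> R i)" for i
  have r: "r i \<in> R i" if "i \<in> I" for i
    using assms that unfolding r_def by (simp add: some_in_eq)
  have ex: "\<forall>i\<in>I. \<exists>G. min_fvs dir (V i) (E i) G \<and> R i - {r i} \<subseteq> G \<and> r i \<notin> G"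
  proof
    fix i assume i: "i \<in> I"
    then have "min_bad dir (V i) (E i) (R i)"
      using assms by blast
    then obtain G where "min_fvs dir (V i) (E i) G" "R i - {r i} \<subseteq> G" "r i \<notin> G"
      using r[OF i] by (rule min_bad_split)
    then show "\<exists>G. min_fvs dir (V i) (E i) G \<and> R i - {r i} \<subseteq> G \<and> r i \<notin> G"
      by blast
  qed
  obtain G where G: "\<forall>i\<in>I. min_fvs dir (V i) (E i) (G i) \<and> R i - {r i} \<subseteq> G i \<and> r i \<notin> G i"
    using bchoice[OF ex] by blast
  have "min_fvs dir (V i) (E i) (G i)" "R i - {r i} \<subseteq> G i" "r i \<notin> G i" if "i \<in> I" for i
    using G that by blast+
  with r show ?thesis
    by (rule that)
qed

lemma fvn_comp_le:
  assumes "finite I" "\<forall>i\<in>I. finite (V i)" "irrefl E0"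
    and "\<forall>i\<in>I. R i \<noteq> {} \<and> min_bad dir (V i) (E i) (R i)"
  shows "fvn dir (Sigma I V) (comp_E I E0 E R) \<le> fvn dir I E0 + (\<Sum>i\<in>I. fvn dir (V i) (E i))"
proof -
  obtain F0 where F0: "min_fvs dir I E0 F0"
    using min_fvs_exists[OF assms(1)] .
  obtain r G where r: "\<And>i. i \<in> I \<Longrightarrow> r i \<in> R i" and G: "\<And>i. i \<in> I \<Longrightarrow> min_fvs dir (V i) (E i) (G i)"
    "\<And>i. i \<in> I \<Longrightarrow> R i - {r i} \<subseteq> G i" "\<And>i. i \<in> I \<Longrightarrow> r i \<notin> G i"
    using min_bad_choice[OF assms(4)] by blast
  have RV: "R i \<subseteq> V i" if "i \<in> I" for i
    using assms(4) that unfolding min_bad_def bad_def by blast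
  have "fvs dir I E0 F0" "F0 \<subseteq> I"
    using F0 unfolding min_fvs_def fvs_def by blast+
  moreover have "\<forall>i\<in>I. fvs dir (V i) (E i) (G i) \<and> r i \<in> V i"
    using G(1) r RV unfolding min_fvs_def by blast
  ultimately have "fvs dir (Sigma I V) (comp_E I E0 E R)
      (Sigma I (\<lambda>i. if i \<in> F0 then insert (r i) (G i) else G i))"
    using G(2) assms(3) by (intro fvs_comp_of_fibres) auto
  then have "fvn dir (Sigma I V) (comp_E I E0 E R) \<le>
      card (Sigma I (\<lambda>i. if i \<in> F0 then insert (r i) (G i) else G i))"
    using assms(1,2) by (intro fvn_le) auto
  also have "\<dots> = (\<Sum>i\<in>I. card (G i)) + card F0"
  proof (rule card_Sigma_insert_if[OF assms(1) \<open>F0 \<subseteq> I\<close>])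
    show "finite (G i) \<and> r i \<notin> G i" if "i \<in> I" for i
      using G(1,3)[OF that] assms(2) that finite_subset unfolding min_fvs_def fvs_def by blast
  qed
  also have "(\<Sum>i\<in>I. card (G i)) = (\<Sum>i\<in>I. fvn dir (V i) (E i))"
    using G(1) unfolding min_fvs_def by (intro sum.cong) auto
  finally show ?thesis
    using F0 unfolding min_fvs_def by simp
qed

section \<open>Elimination orderings\<close>

lemma clique_subset: "clique E A \<Longrightarrow> B \<subseteq> A \<Longrightarrow> clique E B"
  unfolding clique_def by blast

lemma clique_mono: "clique E A \<Longrightarrow> E \<subseteq> E' \<Longrightarrow> clique E' A"
  unfolding clique_def by blast

lemma clique_insert:
  "sym E \<Longrightarrow> clique E A \<Longrightarrow> (\<And>a. a \<in> A \<Longrightarrow> a \<noteq> z \<Longrightarrow> (a, z) \<in> E) \<Longrightarrow> clique E (insert z A)"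
  unfolding clique_def sym_def by blast

text \<open>Vertex orderings are represented by injective rankings \<open>p\<close> rather than by lists;
  \<open>earlier_nbrs\<close> is the counterpart of \<open>prec_nbrs\<close>.\<close>
definition earlier_nbrs :: "('a \<Rightarrow> 'b::linorder) \<Rightarrow> 'a set \<Rightarrow> ('a \<times> 'a) set \<Rightarrow> 'a \<Rightarrow> 'a set" where
  "earlier_nbrs p V E v = {u \<in> V. p u < p v \<and> (u, v) \<in> E}"

definition perfect_elim_order :: "('a \<Rightarrow> 'b::linorder) \<Rightarrow> 'a set \<Rightarrow> ('a \<times> 'a) set \<Rightarrow> bool" where
  "perfect_elim_order p V E \<longleftrightarrow> inj_on p V \<and> (\<forall>v\<in>V. clique E (earlier_nbrs p V E v))"

definition ktree_order :: "nat \<Rightarrow> ('a \<Rightarrow> 'b::linorder) \<Rightarrow> 'a set \<Rightarrow> ('a \<times> 'a) set \<Rightarrow> bool" where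
  "ktree_order k p V E \<longleftrightarrow> perfect_elim_order p V E \<and>
     (\<forall>v\<in>V. card (earlier_nbrs p V E v) = min k (card {u \<in> V. p u < p v}))"

lemma earlier_nbrs_mono: "V' \<subseteq> V \<Longrightarrow> earlier_nbrs p V' E v \<subseteq> earlier_nbrs p V E v"
  unfolding earlier_nbrs_def by blast

lemma perfect_elim_order_subset:
  "perfect_elim_order p V E \<Longrightarrow> V' \<subseteq> V \<Longrightarrow> perfect_elim_order p V' E"
  unfolding perfect_elim_order_def by (meson clique_subset earlier_nbrs_mono inj_on_subset subsetD)

lemma
  assumes "\<forall>u\<in>V. p u < p z"
  shows earlier_nbrs_insert_max: "v \<in> V \<Longrightarrow> earlier_nbrs p (insert z V) E v = earlier_nbrs p V E v"
    and earlier_nbrs_max: "earlier_nbrs p (insert z V) E z = {u \<in> V. (u, z) \<in> E}"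
    and earlier_insert_max: "v \<in> V \<Longrightarrow> {u \<in> insert z V. p u < p v} = {u \<in> V. p u < p v}"
  using assms unfolding earlier_nbrs_def by (auto dest: less_asym)

lemma finite_rank_induct [consumes 2, case_names empty insert]:
  fixes p :: "'a \<Rightarrow> 'b::linorder"
  assumes "finite V" "inj_on p V" "P {}"
    and "\<And>z W. finite W \<Longrightarrow> insert z W \<subseteq> V \<Longrightarrow> z \<notin> W \<Longrightarrow> \<forall>u\<in>W. p u < p z \<Longrightarrow> P W
           \<Longrightarrow> P (insert z W)"
  shows "P V"
proof -
  have "W \<subseteq> V \<longrightarrow> P W" if "finite W" for W
    using that
  proof (induction W rule: finite_ranking_induct[where f = p])
    case (insert z W)
    show ?case
    proof (intro impI)
      assume sub: "insert z W \<subseteq> V"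
      show "P (insert z W)"
      proof (cases "z \<in> W")
        case False
        then have "\<forall>u\<in>W. p u < p z"
          using insert.hyps(2) sub inj_onD[OF assms(2)] by (metis insert_subset order_le_less subsetD)
        then show ?thesis
          using insert sub assms(4) False by blast
      qed (use insert sub in \<open>simp add: insert_absorb\<close>)
    qed
  qed (simp add: assms(3))
  then show ?thesis
    using assms(1) by blast
qed

lemma sorted_rank_distinct:
  fixes p :: "'a \<Rightarrow> 'b::linorder"
  assumes "sorted_wrt (\<lambda>a b. p a < p b) xs"
  shows "distinct xs" "inj_on p (set xs)"
proof -
  have "sorted_wrt (<) (map p xs)"
    using assms by (simp add: sorted_wrt_map)
  then have "distinct (map p xs)"
    by (rule strict_sorted_iff[THEN iffD1, THEN conjunct2])
  then show "distinct xs" "inj_on p (set xs)"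
    unfolding distinct_map by blast+
qed

lemma
  assumes "sorted_wrt (\<lambda>a b. p a < p b) xs" "i < length xs"
  shows prec_nbrs_eq_earlier_nbrs: "prec_nbrs E xs i = earlier_nbrs p (set xs) E (xs ! i)"
    and card_earlier_eq_index: "card {u \<in> set xs. p u < p (xs ! i)} = i"
proof -
  have less_iff: "p (xs ! j) < p (xs ! i) \<longleftrightarrow> j < i" if "j < length xs" for j
    using sorted_wrt_nth_less[OF assms(1)] that assms(2)
    by (metis less_asym linorder_neqE_nat order_less_irrefl)
  have earlier: "{u \<in> set xs. p u < p (xs ! i) \<and> P u} = {xs ! j |j. j < i \<and> P (xs ! j)}" for P
  proof -
    have "{u \<in> set xs. p u < p (xs ! i) \<and> P u} = {xs ! j |j. j < length xs \<and> p (xs ! j) < p (xs ! i) \<and> P (xs ! j)}"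
      by (auto simp: in_set_conv_nth)
    also have "\<dots> = {xs ! j |j. j < i \<and> P (xs ! j)}"
      using less_iff assms(2) by (metis (opaque_lifting) order.strict_trans)
    finally show ?thesis .
  qed
  show "prec_nbrs E xs i = earlier_nbrs p (set xs) E (xs ! i)"
    unfolding prec_nbrs_def earlier_nbrs_def earlier ..
  have "distinct xs"
    using sorted_rank_distinct(1)[OF assms(1)] .
  then have "card ((!) xs ` {..<i}) = i"
    using assms(2) by (simp add: card_image inj_on_nth)
  moreover have "(!) xs ` {..<i} = {xs ! j |j. j < i}"
    by blast
  ultimately show "card {u \<in> set xs. p u < p (xs ! i)} = i"
    using earlier[of "\<lambda>_. True"] by simp
qed

lemma rank_of_distinct_list:
  assumes "distinct xs"
  obtains p :: "'a \<Rightarrow> nat" where "sorted_wrt (\<lambda>a b. p a < p b) xs"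
proof
  define p where "p u = (LEAST i. xs ! i = u)" for u
  have "p (xs ! i) = i" if "i < length xs" for i
    unfolding p_def
  proof (rule Least_equality)
    show "i \<le> j" if "xs ! j = xs ! i" for j
    proof (rule ccontr)
      assume "\<not> i \<le> j"
      then have "j < length xs" "j \<noteq> i"
        using \<open>i < length xs\<close> by auto
      then show False
        using that nth_eq_iff_index_eq[OF assms] \<open>i < length xs\<close> by blast
    qed
  qed simp
  then show "sorted_wrt (\<lambda>a b. p a < p b) xs"
    by (simp add: sorted_wrt_iff_nth_less)
qed

lemma sorted_list_of_rank:
  fixes p :: "'a \<Rightarrow> 'b::linorder"
  assumes "finite V" "inj_on p V"
  obtains xs where "sorted_wrt (\<lambda>a b. p a < p b) xs" "set xs = V"
proof -
  interpret folding_insort_key "(\<le>)" "(<)" V p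
    by unfold_locales (rule assms(2))
  obtain l where "sorted_wrt (<) (map p l)" "set l = V"
    using finite_set_strict_sorted[OF order_refl assms(1)] by blast
  then show ?thesis
    using that by (simp add: sorted_wrt_map)
qed

lemma sorted_rank_prec_nbrs_iff:
  assumes "sorted_wrt (\<lambda>a b. p a < p b) xs"
  shows "(\<forall>i < length xs. \<Phi> (prec_nbrs E xs i) i) \<longleftrightarrow>
    (\<forall>v\<in>set xs. \<Phi> (earlier_nbrs p (set xs) E v) (card {u \<in> set xs. p u < p v}))"
  using prec_nbrs_eq_earlier_nbrs[OF assms] card_earlier_eq_index[OF assms]
  by (simp add: all_set_conv_all_nth)

lemma chordal_perfect_elim_order:
  assumes "chordal V E"
  obtains p :: "'a \<Rightarrow> nat" where "perfect_elim_order p V E"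
proof -
  obtain xs where xs: "distinct xs" "set xs = V" "\<forall>i < length xs. clique E (prec_nbrs E xs i)"
    using assms unfolding chordal_def by blast
  obtain p :: "'a \<Rightarrow> nat" where p: "sorted_wrt (\<lambda>a b. p a < p b) xs"
    using rank_of_distinct_list[OF xs(1)] .
  have "perfect_elim_order p V E"
    unfolding perfect_elim_order_def
    using sorted_rank_prec_nbrs_iff[OF p, where \<Phi> = "\<lambda>S _. clique E S"] sorted_rank_distinct(2)[OF p] xs by simp
  then show ?thesis ..
qed

lemma ktree_order_of_ktree:
  assumes "ktree k V E"
  obtains p :: "'a \<Rightarrow> nat" where "ktree_order k p V E"
proof -
  obtain xs where xs: "distinct xs" "set xs = V"
    "\<forall>i < length xs. clique E (prec_nbrs E xs i) \<and> card (prec_nbrs E xs i) = min k i"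
    using assms unfolding ktree_def by blast
  obtain p :: "'a \<Rightarrow> nat" where p: "sorted_wrt (\<lambda>a b. p a < p b) xs"
    using rank_of_distinct_list[OF xs(1)] .
  have "\<forall>v\<in>set xs. clique E (earlier_nbrs p (set xs) E v) \<and>
      card (earlier_nbrs p (set xs) E v) = min k (card {u \<in> set xs. p u < p v})"
    using sorted_rank_prec_nbrs_iff[OF p, where \<Phi> = "\<lambda>S i. clique E S \<and> card S = min k i"] xs(3)
    by blast
  then have "ktree_order k p V E"
    unfolding ktree_order_def perfect_elim_order_def using sorted_rank_distinct(2)[OF p] xs(2) by blast
  then show ?thesis ..
qed

lemma ktree_of_ktree_order:
  fixes p :: "'a \<Rightarrow> 'b::linorder"
  assumes "graph False V E" "ktree_order k p V E"
  shows "ktree k V E"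
proof -
  have "finite V" "inj_on p V"
    using assms unfolding graph_def ktree_order_def perfect_elim_order_def by blast+
  then obtain xs where xs: "sorted_wrt (\<lambda>a b. p a < p b) xs" "set xs = V"
    by (rule sorted_list_of_rank)
  have "\<forall>v\<in>set xs. clique E (earlier_nbrs p (set xs) E v) \<and>
      card (earlier_nbrs p (set xs) E v) = min k (card {u \<in> set xs. p u < p v})"
    using assms(2) xs(2) unfolding ktree_order_def perfect_elim_order_def by blast
  then have "\<forall>i < length xs. clique E (prec_nbrs E xs i) \<and> card (prec_nbrs E xs i) = min k i"
    using sorted_rank_prec_nbrs_iff[OF xs(1), where \<Phi> = "\<lambda>S i. clique E S \<and> card S = min k i"]
    by blast
  moreover have "distinct xs"
    using sorted_rank_distinct[OF xs(1)] by blast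
  ultimately show ?thesis
    unfolding ktree_def using assms(1) xs(2) by blast
qed

section \<open>k-trees and treewidth\<close>

lemma ktree_order_remove_max:
  assumes "ktree_order k p (insert z W) E" "\<forall>u\<in>W. p u < p z"
  shows "ktree_order k p W E"
  using assms earlier_nbrs_insert_max[OF assms(2)] earlier_insert_max[OF assms(2)]
  unfolding ktree_order_def perfect_elim_order_def by (simp add: inj_on_insert)

lemma ktree_order_insert:
  assumes "ktree_order k p W E" "\<forall>u\<in>W. p u < p z" "E \<subseteq> W \<times> W" "Q \<subseteq> W" "clique E Q"
    "card Q = min k (card W)"
  shows "ktree_order k p (insert z W) (E \<union> {z} \<times> Q \<union> Q \<times> {z})"
proof -
  let ?E = "E \<union> {z} \<times> Q \<union> Q \<times> {z}"
  have z: "z \<notin> W"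
    using assms(2) by blast
  have old: "earlier_nbrs p (insert z W) ?E v = earlier_nbrs p W E v" if "v \<in> W" for v
    using earlier_nbrs_insert_max[OF assms(2) that] z that unfolding earlier_nbrs_def by auto
  have new: "earlier_nbrs p (insert z W) ?E z = Q"
    using earlier_nbrs_max[OF assms(2)] assms(3,4) z by auto
  have "inj_on p (insert z W)"
    using assms(1,2) unfolding ktree_order_def perfect_elim_order_def by (auto simp: inj_on_insert)
  moreover have "clique ?E (earlier_nbrs p (insert z W) ?E v) \<and>
      card (earlier_nbrs p (insert z W) ?E v) = min k (card {u \<in> insert z W. p u < p v})"
    if "v \<in> insert z W" for v
  proof (cases "v = z")
    case True
    have "{u \<in> insert z W. p u < p z} = W"
      using assms(2) by auto
    then show ?thesis
      using True new assms(5,6) clique_mono[of E Q ?E] by auto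
  next
    case False
    then have v: "v \<in> W"
      using that by blast
    then have "clique E (earlier_nbrs p W E v)"
      "card (earlier_nbrs p W E v) = min k (card {u \<in> W. p u < p v})"
      using assms(1) unfolding ktree_order_def perfect_elim_order_def by blast+
    then show ?thesis
      unfolding old[OF v] earlier_insert_max[OF assms(2) v] using clique_mono[of E _ ?E] by blast
  qed
  ultimately show ?thesis
    unfolding ktree_order_def perfect_elim_order_def by blast
qed

lemma ktree_order_max_clique:
  assumes "ktree_order k p (insert z W) E" "\<forall>u\<in>W. p u < p z" "sym E"
  shows "clique E (insert z {u \<in> W. (u, z) \<in> E})" "card {u \<in> W. (u, z) \<in> E} = min k (card W)"
proof -
  have "{u \<in> insert z W. p u < p z} = W"
    using assms(2) by auto
  then have "clique E {u \<in> W. (u, z) \<in> E}" "card {u \<in> W. (u, z) \<in> E} = min k (card W)"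
    using assms(1) earlier_nbrs_max[OF assms(2)] unfolding ktree_order_def perfect_elim_order_def
    by auto
  then show "clique E (insert z {u \<in> W. (u, z) \<in> E})" "card {u \<in> W. (u, z) \<in> E} = min k (card W)"
    using clique_insert[OF assms(3)] by auto
qed

lemma ktree_order_clique_extend:
  assumes "finite V" "sym E" "ktree_order k p V E" "C \<subseteq> V" "clique E C"
  obtains C' where "C \<subseteq> C'" "C' \<subseteq> V" "clique E C'" "card C' = min (Suc k) (card V)"
proof -
  have "inj_on p V"
    using assms(3) unfolding ktree_order_def perfect_elim_order_def by blast
  with assms(1) have "ktree_order k p V E \<longrightarrow> (\<forall>C \<subseteq> V. clique E C \<longrightarrow>
      (\<exists>C'. C \<subseteq> C' \<and> C' \<subseteq> V \<and> clique E C' \<and> card C' = min (Suc k) (card V)))"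
  proof (induction rule: finite_rank_induct)
    case (insert z W)
    show ?case
    proof (intro impI allI)
      fix C assume kt: "ktree_order k p (insert z W) E" and C: "C \<subseteq> insert z W" "clique E C"
      let ?N = "{u \<in> W. (u, z) \<in> E}"
      note N = ktree_order_max_clique[OF kt insert.hyps(4) assms(2)]
      show "\<exists>C'. C \<subseteq> C' \<and> C' \<subseteq> insert z W \<and> clique E C' \<and> card C' = min (Suc k) (card (insert z W))"
      proof (cases "z \<in> C")
        case True
        have "C \<subseteq> insert z ?N"
          using C True unfolding clique_def by blast
        moreover have "card (insert z ?N) = min (Suc k) (card (insert z W))"
          using N(2) insert.hyps(1,3) by simp
        ultimately show ?thesis
          using N(1) by blast
      next
        case False
        then obtain C' where C': "C \<subseteq> C'" "C' \<subseteq> W" "clique E C'" "card C' = min (Suc k) (card W)"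
          using insert.IH ktree_order_remove_max[OF kt insert.hyps(4)] C by blast
        show ?thesis
        proof (cases "Suc k \<le> card W")
          case True
          then show ?thesis
            using C' insert.hyps(1,3) by (intro exI[of _ C']) auto
        next
          case False
          then have "?N = W"
            using N(2) insert.hyps(1) by (simp add: card_subset_eq)
          then show ?thesis
            using N(1) C(1) False insert.hyps(1,3) by (intro exI[of _ "insert z W"]) auto
        qed
      qed
    qed
  qed (auto simp: clique_def)
  then show ?thesis
    using assms(3,4,5) that by blast
qed

lemma ktree_order_insert_clique:
  fixes p :: "'a \<Rightarrow> 'b::linorder"
  assumes "graph False W E" "ktree_order k p W E" "\<forall>u\<in>W. p u < p z"
    and "N \<subseteq> W" "clique E N" "card N \<le> k"
  obtains E' where "E \<union> {z} \<times> N \<union> N \<times> {z} \<subseteq> E'" "graph False (insert z W) E'"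
    "ktree_order k p (insert z W) E'"
proof -
  have W: "finite W" "sym E" "E \<subseteq> W \<times> W" "irrefl E"
    using assms(1) unfolding graph_def irrefl_def by auto
  obtain C where C: "N \<subseteq> C" "C \<subseteq> W" "clique E C" "card C = min (Suc k) (card W)"
    using ktree_order_clique_extend[OF W(1,2) assms(2,4,5)] .
  have "card N \<le> min k (card W)"
    using assms(4,6) W(1) card_mono[of W N] by simp
  moreover have "min k (card W) \<le> card C"
    using C(4) by simp
  moreover have "finite C"
    using C(2) W(1) by (rule finite_subset)
  ultimately obtain Q where Q: "N \<subseteq> Q" "Q \<subseteq> C" "card Q = min k (card W)"
    using exists_subset_between[of N "min k (card W)" C] C(1) by blast
  define E' where "E' = E \<union> {z} \<times> Q \<union> Q \<times> {z}"
  have z: "z \<notin> W"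
    using assms(3) by blast
  have "ktree_order k p (insert z W) E'"
    unfolding E'_def using assms(2,3) W(3) C(2) Q(2,3) clique_subset[OF C(3) Q(2)]
    by (intro ktree_order_insert) auto
  moreover have "graph False (insert z W) E'"
    using W C(2) Q(2) z unfolding E'_def graph_def sym_def irrefl_def by auto
  moreover have "E \<union> {z} \<times> N \<union> N \<times> {z} \<subseteq> E'"
    using Q(1) unfolding E'_def by blast
  ultimately show ?thesis
    using that by blast
qed

lemma ktree_order_supergraph:
  fixes p :: "'a \<Rightarrow> 'b::linorder"
  assumes "finite V" "sym E" "irrefl E" "perfect_elim_order p V E"
    and "\<forall>v\<in>V. card (earlier_nbrs p V E v) \<le> k"
  obtains E' where "E \<inter> V \<times> V \<subseteq> E'" "graph False V E'" "ktree_order k p V E'"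
proof -
  have "inj_on p V"
    using assms(4) unfolding perfect_elim_order_def by blast
  with assms(1) have "V \<subseteq> V \<longrightarrow> (\<exists>E'. E \<inter> V \<times> V \<subseteq> E' \<and> graph False V E' \<and> ktree_order k p V E')"
  proof (induction rule: finite_rank_induct)
    case empty
    have "graph False {} {}" "ktree_order k p {} {}"
      unfolding graph_def ktree_order_def perfect_elim_order_def sym_def by simp_all
    then show ?case
      by blast
  next
    case (insert z W)
    obtain E0 where E0: "E \<inter> W \<times> W \<subseteq> E0" "graph False W E0" "ktree_order k p W E0"
      using insert.IH insert.hyps(2) by blast
    define N where "N = {u \<in> W. (u, z) \<in> E}"
    have "N = earlier_nbrs p (insert z W) E z"
      unfolding N_def using earlier_nbrs_max[OF insert.hyps(4)] by simp
    also have "\<dots> \<subseteq> earlier_nbrs p V E z"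
      using insert.hyps(2) by (rule earlier_nbrs_mono)
    finally have Nsub: "N \<subseteq> earlier_nbrs p V E z" .
    have "z \<in> V"
      using insert.hyps(2) by blast
    then have "clique E N"
      using assms(4) clique_subset[OF _ Nsub] unfolding perfect_elim_order_def by blast
    then have "clique E0 N"
      using E0(1) unfolding N_def clique_def by blast
    moreover have "card N \<le> k"
      using card_mono[OF _ Nsub] assms(1,5) \<open>z \<in> V\<close> unfolding earlier_nbrs_def by fastforce
    moreover have "N \<subseteq> W"
      unfolding N_def by blast
    ultimately obtain E' where E': "E0 \<union> {z} \<times> N \<union> N \<times> {z} \<subseteq> E'" "graph False (insert z W) E'"
      "ktree_order k p (insert z W) E'"
      using ktree_order_insert_clique[OF E0(2,3) insert.hyps(4) \<open>N \<subseteq> W\<close>] by blast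
    have "E \<inter> insert z W \<times> insert z W \<subseteq> E \<inter> W \<times> W \<union> {z} \<times> N \<union> N \<times> {z}"
      using assms(2,3) unfolding N_def sym_def irrefl_def by blast
    then have "E \<inter> insert z W \<times> insert z W \<subseteq> E'"
      using E0(1) E'(1) by blast
    then show ?case
      using E'(2,3) by blast
  qed
  then show ?thesis
    using that by blast
qed

lemma tw_le_of_perfect_elim_order:
  fixes p :: "'a \<Rightarrow> 'b::linorder"
  assumes "finite V" "E \<subseteq> V \<times> V" "sym E" "irrefl E" "perfect_elim_order p V E"
    and "\<forall>v\<in>V. card (earlier_nbrs p V E v) \<le> k"
  shows "tw_le k V E"
proof -
  obtain E' where "E \<inter> V \<times> V \<subseteq> E'" "graph False V E'" "ktree_order k p V E'"
    using ktree_order_supergraph[OF assms(1,3,4,5,6)] .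
  then show ?thesis
    unfolding tw_le_def using assms(2) ktree_of_ktree_order by blast
qed

lemma perfect_elim_order_of_tw_le:
  assumes "tw_le k V E" "E \<subseteq> V \<times> V"
  obtains E' and p :: "'a \<Rightarrow> nat" where "E \<subseteq> E'" "E' \<subseteq> V \<times> V" "sym E'" "irrefl E'"
    "perfect_elim_order p V E'" "\<forall>v\<in>V. card (earlier_nbrs p V E' v) \<le> k"
proof -
  obtain W T where WT: "V \<subseteq> W" "ktree k W T" "E \<subseteq> T"
    using assms(1) unfolding tw_le_def by blast
  obtain p :: "'a \<Rightarrow> nat" where p: "ktree_order k p W T"
    using ktree_order_of_ktree[OF WT(2)] .
  have T: "finite W" "sym T" "irrefl T"
    using WT(2) unfolding ktree_def graph_def irrefl_def by auto
  define E' where "E' = T \<inter> V \<times> V"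
  have sub: "earlier_nbrs p V E' v \<subseteq> earlier_nbrs p W T v" for v
    using WT(1) unfolding E'_def earlier_nbrs_def by blast
  have "inj_on p V"
    using p WT(1) inj_on_subset unfolding ktree_order_def perfect_elim_order_def by blast
  moreover have "clique E' (earlier_nbrs p V E' v)" if "v \<in> V" for v
  proof -
    have "clique T (earlier_nbrs p V E' v)"
      using p WT(1) that clique_subset[OF _ sub] unfolding ktree_order_def perfect_elim_order_def
      by blast
    then show ?thesis
      unfolding clique_def E'_def earlier_nbrs_def by blast
  qed
  moreover have "card (earlier_nbrs p V E' v) \<le> k" if "v \<in> V" for v
  proof -
    have "finite (earlier_nbrs p W T v)"
      using T(1) unfolding earlier_nbrs_def by simp
    then have "card (earlier_nbrs p V E' v) \<le> card (earlier_nbrs p W T v)"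
      using sub by (rule card_mono)
    then show ?thesis
      using p WT(1) that unfolding ktree_order_def by auto
  qed
  moreover have "E \<subseteq> E'" "E' \<subseteq> V \<times> V" "sym E'" "irrefl E'"
    using WT(3) assms(2) T(2,3) unfolding E'_def sym_def irrefl_def by blast+
  ultimately show ?thesis
    using that[of E' p] unfolding perfect_elim_order_def by blast
qed

lemma card_clique_le_of_perfect_elim_order:
  assumes "finite V" "perfect_elim_order p V E"
    and "\<forall>v\<in>V. card (earlier_nbrs p V E v) \<le> k" "C \<subseteq> V" "clique E C"
  shows "card C \<le> Suc k"
proof (cases "C = {}")
  case False
  have fin: "finite C"
    using assms(1,4) finite_subset by blast
  then have "Max (p ` C) \<in> p ` C"
    using False by simp
  then obtain v where v: "v \<in> C" "p v = Max (p ` C)"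
    by auto
  have "C - {v} \<subseteq> earlier_nbrs p V E v"
  proof
    fix u assume u: "u \<in> C - {v}"
    then have "p u \<noteq> p v"
      using v(1) assms(2,4) unfolding perfect_elim_order_def inj_on_def by blast
    moreover have "p u \<le> p v"
      unfolding v(2) using u fin by (intro Max_ge) auto
    ultimately have "p u < p v"
      by simp
    then show "u \<in> earlier_nbrs p V E v"
      using u v(1) assms(4,5) unfolding clique_def earlier_nbrs_def by blast
  qed
  moreover have "finite (earlier_nbrs p V E v)"
    using assms(1) unfolding earlier_nbrs_def by simp
  ultimately have "card (C - {v}) \<le> card (earlier_nbrs p V E v)"
    by (rule card_mono[rotated])
  also have "\<dots> \<le> k"
    using assms(3,4) v(1) by blast
  finally show ?thesis
    using fin v(1) by (simp add: card_Diff_singleton)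
qed simp

lemma tw_le_card_clique:
  assumes "tw_le k V E" "finite V" "E \<subseteq> V \<times> V" "C \<subseteq> V" "clique E C"
  shows "card C \<le> Suc k"
proof -
  obtain E' and p :: "'a \<Rightarrow> nat" where E': "E \<subseteq> E'" "E' \<subseteq> V \<times> V" "sym E'" "irrefl E'"
    "perfect_elim_order p V E'" "\<forall>v\<in>V. card (earlier_nbrs p V E' v) \<le> k"
    by (rule perfect_elim_order_of_tw_le[OF assms(1,3)])
  show ?thesis
    using card_clique_le_of_perfect_elim_order[OF assms(2) E'(5,6) assms(4) clique_mono[OF assms(5) E'(1)]] .
qed

section \<open>Chordal graphs\<close>

lemma clique_nbhd_insert:
  assumes "sym E" "clique E {u \<in> W. (u, w) \<in> E}" "(w, z) \<notin> E \<or> (\<forall>u\<in>W. (u, z) \<in> E)"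
  shows "clique E {u \<in> insert z W. (u, w) \<in> E}"
proof (cases "(w, z) \<in> E")
  case False
  then have "{u \<in> insert z W. (u, w) \<in> E} = {u \<in> W. (u, w) \<in> E}"
    using assms(1) unfolding sym_def by blast
  then show ?thesis
    using assms(2) by simp
next
  case True
  then have "\<forall>u\<in>W. (u, z) \<in> E"
    using assms(3) by blast
  then have "clique E (insert z {u \<in> W. (u, w) \<in> E})"
    by (intro clique_insert[OF assms(1,2)]) auto
  moreover have "{u \<in> insert z W. (u, w) \<in> E} \<subseteq> insert z {u \<in> W. (u, w) \<in> E}"
    by blast
  ultimately show ?thesis
    by (rule clique_subset)
qed

lemma simplicial_outside_clique_insert:
  assumes "sym E" "irrefl E" "z \<notin> W" "clique E {u \<in> W. (u, z) \<in> E}"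
    and IH: "\<forall>K \<subseteq> W. clique E K \<longrightarrow> K \<noteq> W \<longrightarrow> (\<exists>w \<in> W - K. clique E {u \<in> W. (u, w) \<in> E})"
    and K: "K \<subseteq> insert z W" "clique E K" "K \<noteq> insert z W"
  shows "\<exists>w \<in> insert z W - K. clique E {u \<in> insert z W. (u, w) \<in> E}"
proof (cases "z \<in> K")
  case False
  have "{u \<in> insert z W. (u, z) \<in> E} = {u \<in> W. (u, z) \<in> E}"
    using assms(2) unfolding irrefl_def by auto
  then have "clique E {u \<in> insert z W. (u, z) \<in> E}"
    using assms(4) by (simp only:)
  moreover have "z \<in> insert z W - K"
    using False by blast
  ultimately show ?thesis
    by blast
next
  case True
  let ?N = "{u \<in> W. (u, z) \<in> E}"
  have KN: "K \<subseteq> insert z ?N"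
    using K True assms(1) unfolding clique_def sym_def by blast
  obtain w where w: "w \<in> W - K" "clique E {u \<in> W. (u, w) \<in> E}" "(w, z) \<notin> E \<or> (\<forall>u\<in>W. (u, z) \<in> E)"
  proof (cases "?N = W")
    case True
    have "K - {z} \<subseteq> W" "K - {z} \<noteq> W"
      using K(1,3) \<open>z \<in> K\<close> assms(3) by blast+
    moreover have "clique E (K - {z})"
      using K(2) clique_subset by blast
    ultimately obtain w where "w \<in> W - (K - {z})" "clique E {u \<in> W. (u, w) \<in> E}"
      using IH by blast
    then show ?thesis
      using that True assms(3) by blast
  next
    case False
    moreover have "?N \<subseteq> W"
      by blast
    ultimately obtain w where "w \<in> W - ?N" "clique E {u \<in> W. (u, w) \<in> E}"
      using IH assms(4) by blast
    then show ?thesis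
      using that KN assms(3) by blast
  qed
  then show ?thesis
    using clique_nbhd_insert[OF assms(1) w(2,3)] by blast
qed

lemma simplicial_outside_clique:
  fixes p :: "'a \<Rightarrow> 'b::linorder"
  assumes "finite V" "sym E" "irrefl E" "perfect_elim_order p V E"
    and "K \<subseteq> V" "clique E K" "K \<noteq> V"
  obtains w where "w \<in> V - K" "clique E {u \<in> V. (u, w) \<in> E}"
proof -
  have "inj_on p V"
    using assms(4) unfolding perfect_elim_order_def by blast
  with assms(1) have "\<forall>K \<subseteq> V. clique E K \<longrightarrow> K \<noteq> V \<longrightarrow> (\<exists>w \<in> V - K. clique E {u \<in> V. (u, w) \<in> E})"
  proof (induction rule: finite_rank_induct)
    case (insert z W)
    have "perfect_elim_order p (insert z W) E"
      using assms(4) insert.hyps(2) by (rule perfect_elim_order_subset)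
    then have "clique E {u \<in> W. (u, z) \<in> E}"
      using earlier_nbrs_max[OF insert.hyps(4)] unfolding perfect_elim_order_def by auto
    then show ?case
      using simplicial_outside_clique_insert[OF assms(2,3) insert.hyps(3) _ insert.IH] by blast
  qed simp
  then show ?thesis
    using assms(5,6,7) that by blast
qed

lemma perfect_elim_order_append:
  assumes "perfect_elim_order q (A - {w}) E" "finite A" "w \<in> A" "clique E {u \<in> A. (u, w) \<in> E}"
  obtains q' :: "'a \<Rightarrow> nat"
  where "perfect_elim_order q' A E" "\<And>u. u \<in> A - {w} \<Longrightarrow> q' u = q u \<and> q u < q' w"
proof -
  have "finite (q ` (A - {w}))"
    using assms(2) by blast
  then obtain M where M: "\<forall>u\<in>A - {w}. q u < M"
    unfolding finite_nat_set_iff_bounded by blast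
  define q' where "q' = q(w := M)"
  have q': "q' u = q u \<and> q u < q' w" if "u \<in> A - {w}" for u
    using that M unfolding q'_def by simp
  have "inj_on q' A"
  proof -
    have "inj_on q' (A - {w})"
      using assms(1) q' unfolding perfect_elim_order_def inj_on_def by simp
    moreover have "q' w \<notin> q' ` (A - {w})"
      using q' by fastforce
    ultimately have "inj_on q' (insert w (A - {w}))"
      using inj_on_insert[of q' w "A - {w}"] by blast
    then show ?thesis
      using insert_Diff[OF assms(3)] by simp
  qed
  moreover have "clique E (earlier_nbrs q' A E v)" if "v \<in> A" for v
  proof (cases "v = w")
    case True
    have "earlier_nbrs q' A E w \<subseteq> {u \<in> A. (u, w) \<in> E}"
      unfolding earlier_nbrs_def by blast
    then show ?thesis
      using True clique_subset[OF assms(4)] by blast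
  next
    case False
    then have v: "v \<in> A - {w}"
      using that by blast
    have "u \<in> earlier_nbrs q' A E v \<longleftrightarrow> u \<in> earlier_nbrs q (A - {w}) E v" for u
      using q' v by (cases "u = w") (auto simp: earlier_nbrs_def dest: less_trans)
    then have "earlier_nbrs q' A E v = earlier_nbrs q (A - {w}) E v"
      by blast
    then show ?thesis
      using assms(1) v unfolding perfect_elim_order_def by simp
  qed
  ultimately show ?thesis
    using that q' unfolding perfect_elim_order_def by blast
qed

lemma chordal_clique_first:
  assumes "chordal V E" "finite V" "sym E" "irrefl E" "K \<subseteq> V" "clique E K"
  obtains q :: "'a \<Rightarrow> nat" where "perfect_elim_order q V E" "\<forall>a\<in>K. \<forall>b\<in>V - K. q a < q b"
proof -
  obtain p :: "'a \<Rightarrow> nat" where p: "perfect_elim_order p V E"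
    using assms(1) by (rule chordal_perfect_elim_order)
  have "K \<subseteq> V \<longrightarrow> (\<exists>q :: 'a \<Rightarrow> nat. perfect_elim_order q V E \<and> (\<forall>a\<in>K. \<forall>b\<in>V - K. q a < q b))"
    using assms(2)
  proof (induction rule: finite_remove_induct)
    case empty
    show ?case
      using perfect_elim_order_subset[OF p, of "{}"] by blast
  next
    case (remove A)
    show ?case
    proof (intro impI)
      assume KA: "K \<subseteq> A"
      have pA: "perfect_elim_order p A E"
        using p remove.hyps(3) by (rule perfect_elim_order_subset)
      show "\<exists>q :: 'a \<Rightarrow> nat. perfect_elim_order q A E \<and> (\<forall>a\<in>K. \<forall>b\<in>A - K. q a < q b)"
      proof (cases "K = A")
        case False
        obtain w where w: "w \<in> A - K" "clique E {u \<in> A. (u, w) \<in> E}"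
          using simplicial_outside_clique[OF remove.hyps(1) assms(3,4) pA KA assms(6) False] .
        obtain q :: "'a \<Rightarrow> nat" where q: "perfect_elim_order q (A - {w}) E"
          "\<forall>a\<in>K. \<forall>b\<in>A - {w} - K. q a < q b"
          using remove.IH[of w] w(1) KA by auto
        obtain q' :: "'a \<Rightarrow> nat" where q': "perfect_elim_order q' A E"
          "\<And>u. u \<in> A - {w} \<Longrightarrow> q' u = q u \<and> q u < q' w"
          using perfect_elim_order_append[OF q(1) remove.hyps(1)] w by blast
        have "q' a < q' b" if "a \<in> K" "b \<in> A - K" for a b
        proof -
          have a: "a \<in> A - {w}"
            using that(1) KA w(1) by blast
          show ?thesis
          proof (cases "b = w")
            case False
            then have "b \<in> A - {w} - K"
              using that(2) by blast
            then show ?thesis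
              using q(2) that(1) q'(2)[OF a] q'(2)[of b] by auto
          qed (use q'(2)[OF a] in simp)
        qed
        then show ?thesis
          using q'(1) by blast
      qed (use pA in blast)
    qed
  qed
  then show ?thesis
    using assms(5) that by blast
qed

section \<open>Treewidth of the composition\<close>

lemma comp_E_mono: "E0 \<subseteq> E0' \<Longrightarrow> comp_E I E0 E R \<subseteq> comp_E I E0' E R"
  unfolding comp_E_def by blast

lemma clique_comp_E:
  assumes "clique T J" "J \<subseteq> I" "\<And>j. j \<in> J \<Longrightarrow> clique (E j) (R j)"
  shows "clique (comp_E I T E R) (Sigma J R)"
  unfolding clique_def
proof (intro ballI impI)
  fix a b assume ab: "a \<in> Sigma J R" "b \<in> Sigma J R" "a \<noteq> b"
  then obtain i x j y where a: "a = (i, x)" "i \<in> J" "x \<in> R i" and b: "b = (j, y)" "j \<in> J" "y \<in> R j"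
    by blast
  show "(a, b) \<in> comp_E I T E R"
  proof (cases "i = j")
    case True
    then have "(x, y) \<in> E i"
      using ab(3) a b assms(3) unfolding clique_def by blast
    then show ?thesis
      using True a b assms(2) unfolding comp_E_def by blast
  next
    case False
    then have "(i, j) \<in> T"
      using a(2) b(2) assms(1) unfolding clique_def by blast
    then show ?thesis
      using a b unfolding comp_E_def by blast
  qed
qed

lemma card_Sigma_le:
  assumes "finite J" "\<And>j. j \<in> J \<Longrightarrow> finite (R j) \<and> card (R j) \<le> c"
  shows "card (Sigma J R) \<le> card J * c"
proof -
  have "card (Sigma J R) = (\<Sum>j\<in>J. card (R j))"
    using assms by (simp add: card_SigmaI)
  also have "\<dots> \<le> card J * c"
    using sum_bounded_above[of J "\<lambda>j. card (R j)" c] assms(2) by auto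
  finally show ?thesis .
qed

text \<open>As \<open>False < True\<close>, the vertices of the sets \<open>R i\<close> come first.\<close>
definition comp_rank :: "('i \<Rightarrow> 'a set) \<Rightarrow> ('i \<Rightarrow> 'b) \<Rightarrow> ('i \<Rightarrow> 'a \<Rightarrow> 'c) \<Rightarrow> 'i \<times> 'a \<Rightarrow> bool \<times> 'b \<times> 'c" where
  "comp_rank R p0 q = (\<lambda>(i, x). (x \<notin> R i, p0 i, q i x))"

context
  fixes I :: "'i set" and T :: "('i \<times> 'i) set" and p0 :: "'i \<Rightarrow> 'b::linorder"
    and V :: "'i \<Rightarrow> 'a set" and E :: "'i \<Rightarrow> ('a \<times> 'a) set" and R :: "'i \<Rightarrow> 'a set"
    and q :: "'i \<Rightarrow> 'a \<Rightarrow> 'c::linorder"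
  assumes order0: "perfect_elim_order p0 I T" and sym0: "sym T"
    and orders: "\<And>i. i \<in> I \<Longrightarrow> perfect_elim_order (q i) (V i) (E i)"
    and ports_clique: "\<And>i. i \<in> I \<Longrightarrow> clique (E i) (R i)"
    and ports_first: "\<And>i a b. i \<in> I \<Longrightarrow> a \<in> R i \<Longrightarrow> b \<in> V i - R i \<Longrightarrow> q i a < q i b"
begin

lemma comp_rank_less_nonport:
  assumes "i \<in> I" "y \<in> V i" "x \<in> V i - R i"
  shows "comp_rank R p0 q (i, y) < comp_rank R p0 q (i, x) \<longleftrightarrow> q i y < q i x"
  using assms ports_first[OF assms(1) _ assms(3), of y] by (cases "y \<in> R i") (auto simp: comp_rank_def)

lemma inj_on_comp_rank: "inj_on (comp_rank R p0 q) (Sigma I V)"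
proof (rule inj_onI)
  fix a b assume ab: "a \<in> Sigma I V" "b \<in> Sigma I V" "comp_rank R p0 q a = comp_rank R p0 q b"
  then obtain i x j y where a: "a = (i, x)" "i \<in> I" "x \<in> V i" and b: "b = (j, y)" "j \<in> I" "y \<in> V j"
    by blast
  have "p0 i = p0 j" "q i x = q j y"
    using ab(3) a(1) b(1) unfolding comp_rank_def by auto
  then have "i = j"
    using order0 a(2) b(2) unfolding perfect_elim_order_def inj_on_def by blast
  then have "x = y"
    using \<open>q i x = q j y\<close> orders[OF a(2)] a(3) b(3) unfolding perfect_elim_order_def inj_on_def by blast
  then show "a = b"
    using a(1) b(1) \<open>i = j\<close> by simp
qed

lemma earlier_nbrs_comp_nonport:
  assumes "i \<in> I" "x \<in> V i - R i"
  shows "earlier_nbrs (comp_rank R p0 q) (Sigma I V) (comp_E I T E R) (i, x) =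
    Pair i ` earlier_nbrs (q i) (V i) (E i) x"
proof (intro equalityI subsetI)
  fix u assume u: "u \<in> earlier_nbrs (comp_rank R p0 q) (Sigma I V) (comp_E I T E R) (i, x)"
  then obtain j y where uj: "u = (j, y)" "j \<in> I" "y \<in> V j"
    "comp_rank R p0 q (j, y) < comp_rank R p0 q (i, x)" "((j, y), (i, x)) \<in> comp_E I T E R"
    unfolding earlier_nbrs_def by blast
  then have "j = i" "(y, x) \<in> E i"
    using assms(2) unfolding comp_E_def by auto
  then show "u \<in> Pair i ` earlier_nbrs (q i) (V i) (E i) x"
    using uj comp_rank_less_nonport[OF assms(1) _ assms(2)] unfolding earlier_nbrs_def by auto
next
  fix u assume "u \<in> Pair i ` earlier_nbrs (q i) (V i) (E i) x"
  then obtain y where y: "u = (i, y)" "y \<in> V i" "q i y < q i x" "(y, x) \<in> E i"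
    unfolding earlier_nbrs_def by blast
  then show "u \<in> earlier_nbrs (comp_rank R p0 q) (Sigma I V) (comp_E I T E R) (i, x)"
    using assms comp_rank_less_nonport[OF assms(1) y(2) assms(2)]
    unfolding earlier_nbrs_def comp_E_def by auto
qed

lemma earlier_nbrs_comp_port:
  assumes "i \<in> I" "x \<in> R i"
  shows "earlier_nbrs (comp_rank R p0 q) (Sigma I V) (comp_E I T E R) (i, x) \<subseteq>
    Sigma (insert i (earlier_nbrs p0 I T i)) R - {(i, x)}"
proof
  fix u assume u: "u \<in> earlier_nbrs (comp_rank R p0 q) (Sigma I V) (comp_E I T E R) (i, x)"
  then obtain j y where uj: "u = (j, y)" "j \<in> I"
    "comp_rank R p0 q (j, y) < comp_rank R p0 q (i, x)" "((j, y), (i, x)) \<in> comp_E I T E R"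
    unfolding earlier_nbrs_def by blast
  then have y: "y \<in> R j"
    using assms(2) unfolding comp_rank_def by auto
  have "u \<noteq> (i, x)"
    using uj(1,3) by auto
  moreover have "j \<in> insert i (earlier_nbrs p0 I T i)"
  proof (cases "j = i")
    case False
    then have "(j, i) \<in> T"
      using uj(4) unfolding comp_E_def by auto
    moreover have "p0 j \<noteq> p0 i"
      using False order0 uj(2) assms(1) unfolding perfect_elim_order_def inj_on_def by blast
    ultimately show ?thesis
      using uj(2,3) y assms(2) unfolding comp_rank_def earlier_nbrs_def by auto
  qed simp
  ultimately show "u \<in> Sigma (insert i (earlier_nbrs p0 I T i)) R - {(i, x)}"
    using uj(1) y by blast
qed

lemma perfect_elim_order_comp: "perfect_elim_order (comp_rank R p0 q) (Sigma I V) (comp_E I T E R)"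
  unfolding perfect_elim_order_def
proof (intro conjI inj_on_comp_rank ballI)
  fix v assume "v \<in> Sigma I V"
  then obtain i x where v: "v = (i, x)" "i \<in> I" "x \<in> V i"
    by blast
  show "clique (comp_E I T E R) (earlier_nbrs (comp_rank R p0 q) (Sigma I V) (comp_E I T E R) v)"
  proof (cases "x \<in> R i")
    case False
    have "clique (E i) (earlier_nbrs (q i) (V i) (E i) x)"
      using orders[OF v(2)] v(3) unfolding perfect_elim_order_def by blast
    then have "clique (comp_E I T E R) (Pair i ` earlier_nbrs (q i) (V i) (E i) x)"
      using v(2) unfolding clique_def comp_E_def by blast
    then show ?thesis
      using earlier_nbrs_comp_nonport[OF v(2)] v False by simp
  next
    case True
    let ?J = "earlier_nbrs p0 I T i"
    have "clique T ?J"
      using order0 v(2) unfolding perfect_elim_order_def by blast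
    then have "clique T (insert i ?J)"
      by (rule clique_insert[OF sym0]) (auto simp: earlier_nbrs_def)
    moreover have "insert i ?J \<subseteq> I"
      using v(2) unfolding earlier_nbrs_def by blast
    ultimately have "clique (comp_E I T E R) (Sigma (insert i ?J) R)"
      using ports_clique by (intro clique_comp_E) auto
    then show ?thesis
      using earlier_nbrs_comp_port[OF v(2) True] v(1) clique_subset by blast
  qed
qed

lemma card_earlier_nbrs_comp:
  assumes "finite I" "\<forall>j\<in>I. card (earlier_nbrs p0 I T j) \<le> t0"
    and "\<And>i. i \<in> I \<Longrightarrow> finite (R i)" "\<And>i. i \<in> I \<Longrightarrow> card (R i) \<le> c"
    and "\<And>i x. i \<in> I \<Longrightarrow> x \<in> V i - R i \<Longrightarrow> card (earlier_nbrs (q i) (V i) (E i) x) \<le> t"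
    and "v \<in> Sigma I V"
  shows "card (earlier_nbrs (comp_rank R p0 q) (Sigma I V) (comp_E I T E R) v) \<le> max t (c * (t0 + 1) - 1)"
proof -
  obtain i x where v: "v = (i, x)" "i \<in> I" "x \<in> V i"
    using assms(6) by blast
  show ?thesis
  proof (cases "x \<in> R i")
    case False
    then have x: "x \<in> V i - R i"
      using v(3) by blast
    have "card (Pair i ` earlier_nbrs (q i) (V i) (E i) x) \<le> t"
      using assms(5)[OF v(2) x] by (simp add: card_image inj_on_def)
    then show ?thesis
      using earlier_nbrs_comp_nonport[OF v(2) x] v(1) by simp
  next
    case True
    let ?J = "insert i (earlier_nbrs p0 I T i)"
    have J: "?J \<subseteq> I" "finite ?J"
      using v(2) assms(1) unfolding earlier_nbrs_def by auto
    then have fin: "finite (Sigma ?J R)"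
      using assms(3) by blast
    have "card ?J \<le> t0 + 1"
      using assms(2) v(2) by (intro card_insert_le_m1) auto
    then have "card (Sigma ?J R) \<le> (t0 + 1) * c"
      using card_Sigma_le[of ?J R c] J assms(3,4) by (meson le_trans mult_le_mono1 subsetD)
    then have "card (Sigma ?J R - {(i, x)}) \<le> c * (t0 + 1) - 1"
      using fin True by (simp add: card_Diff_singleton mult.commute)
    moreover have "card (earlier_nbrs (comp_rank R p0 q) (Sigma I V) (comp_E I T E R) v) \<le>
        card (Sigma ?J R - {(i, x)})"
      using earlier_nbrs_comp_port[OF v(2) True] fin v(1) by (simp add: card_mono)
    ultimately show ?thesis
      by simp
  qed
qed

end

lemma tw_le_mono: "tw_le k V E \<Longrightarrow> E' \<subseteq> E \<Longrightarrow> tw_le k V E'"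
  unfolding tw_le_def by blast

lemma card_earlier_nbrs_le_tw:
  assumes "graph False V E" "tw_le t V E" "perfect_elim_order q V E" "x \<in> V"
  shows "card (earlier_nbrs q V E x) \<le> t"
proof -
  let ?N = "earlier_nbrs q V E x"
  have V: "finite V" "E \<subseteq> V \<times> V" "sym E"
    using assms(1) unfolding graph_def by auto
  have "clique E ?N"
    using assms(3,4) unfolding perfect_elim_order_def by blast
  then have "clique E (insert x ?N)"
    by (rule clique_insert[OF V(3)]) (auto simp: earlier_nbrs_def)
  moreover have "insert x ?N \<subseteq> V"
    using assms(4) unfolding earlier_nbrs_def by blast
  ultimately have "card (insert x ?N) \<le> Suc t"
    using tw_le_card_clique[OF assms(2) V(1,2)] by blast
  moreover have "finite ?N" "x \<notin> ?N"
    using V(1) unfolding earlier_nbrs_def by auto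
  ultimately show ?thesis
    by simp
qed

lemma chordal_clique_first_family:
  assumes "\<forall>i\<in>I. graph False (V i) (E i) \<and> chordal (V i) (E i) \<and> R i \<subseteq> V i \<and> clique (E i) (R i)"
  obtains q :: "'i \<Rightarrow> 'a \<Rightarrow> nat"
  where "\<forall>i\<in>I. perfect_elim_order (q i) (V i) (E i) \<and> (\<forall>a\<in>R i. \<forall>b\<in>V i - R i. q i a < q i b)"
proof -
  have ex: "\<forall>i\<in>I. \<exists>qi :: 'a \<Rightarrow> nat. perfect_elim_order qi (V i) (E i) \<and>
      (\<forall>a\<in>R i. \<forall>b\<in>V i - R i. qi a < qi b)"
  proof
    fix i assume i: "i \<in> I"
    have "chordal (V i) (E i)" "finite (V i)" "sym (E i)" "irrefl (E i)" "R i \<subseteq> V i" "clique (E i) (R i)"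
      using assms i unfolding graph_def irrefl_def by auto
    then obtain qi :: "'a \<Rightarrow> nat" where "perfect_elim_order qi (V i) (E i)"
      "\<forall>a\<in>R i. \<forall>b\<in>V i - R i. qi a < qi b"
      by (rule chordal_clique_first)
    then show "\<exists>qi :: 'a \<Rightarrow> nat. perfect_elim_order qi (V i) (E i) \<and>
        (\<forall>a\<in>R i. \<forall>b\<in>V i - R i. qi a < qi b)"
      by blast
  qed
  then show ?thesis
    using that bchoice[OF ex] by blast
qed

lemma tw_le_comp:
  fixes I :: "'i set" and V :: "'i \<Rightarrow> 'a set"
  assumes "graph False I E0" "tw_le t0 I E0"
    and fibres: "\<forall>i\<in>I. graph False (V i) (E i) \<and> chordal (V i) (E i) \<and> tw_le t (V i) (E i)"
    and ports: "\<forall>i\<in>I. R i \<subseteq> V i \<and> clique (E i) (R i) \<and> card (R i) \<le> c"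
  shows "tw_le (max t (c * (t0 + 1) - 1)) (Sigma I V) (comp_E I E0 E R)"
proof -
  have finI: "finite I" and E0: "E0 \<subseteq> I \<times> I"
    using assms(1) unfolding graph_def by auto
  have Ei: "finite (V i)" "E i \<subseteq> V i \<times> V i" "sym (E i)" "irrefl (E i)" if "i \<in> I" for i
    using fibres that unfolding graph_def irrefl_def by auto
  have Ri: "clique (E i) (R i)" "finite (R i)" "card (R i) \<le> c" if "i \<in> I" for i
    using ports Ei(1) that finite_subset by blast+
  obtain T and p0 :: "'i \<Rightarrow> nat" where T: "E0 \<subseteq> T" "T \<subseteq> I \<times> I" "sym T" "irrefl T"
    "perfect_elim_order p0 I T" "\<forall>j\<in>I. card (earlier_nbrs p0 I T j) \<le> t0"
    by (rule perfect_elim_order_of_tw_le[OF assms(2) E0])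
  have "\<forall>i\<in>I. graph False (V i) (E i) \<and> chordal (V i) (E i) \<and> R i \<subseteq> V i \<and> clique (E i) (R i)"
    using fibres ports by blast
  then obtain q :: "'i \<Rightarrow> 'a \<Rightarrow> nat"
    where "\<forall>i\<in>I. perfect_elim_order (q i) (V i) (E i) \<and> (\<forall>a\<in>R i. \<forall>b\<in>V i - R i. q i a < q i b)"
    by (rule chordal_clique_first_family)
  then have q: "\<And>i. i \<in> I \<Longrightarrow> perfect_elim_order (q i) (V i) (E i)"
    "\<And>i a b. i \<in> I \<Longrightarrow> a \<in> R i \<Longrightarrow> b \<in> V i - R i \<Longrightarrow> q i a < q i b"
    by blast+
  have nonport: "card (earlier_nbrs (q i) (V i) (E i) x) \<le> t" if "i \<in> I" "x \<in> V i - R i" for i x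
    using card_earlier_nbrs_le_tw[OF _ _ q(1)[OF that(1)]] fibres that by blast
  let ?G = "comp_E I T E R"
  let ?P = "comp_rank R p0 q"
  have "perfect_elim_order ?P (Sigma I V) ?G"
    using perfect_elim_order_comp[OF T(5,3) q(1) Ri(1) q(2)] .
  moreover have "card (earlier_nbrs ?P (Sigma I V) ?G v) \<le> max t (c * (t0 + 1) - 1)"
    if "v \<in> Sigma I V" for v
    using card_earlier_nbrs_comp[OF T(5,3) q(1) Ri(1) q(2) finI T(6) Ri(2) Ri(3) nonport that] .
  moreover have "?G \<subseteq> Sigma I V \<times> Sigma I V"
    using T(2) Ei(2) ports unfolding comp_E_def by blast
  moreover have "sym ?G" "irrefl ?G"
    using T(3,4) Ei(3,4) unfolding comp_E_def sym_def irrefl_def by blast+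
  moreover have "finite (Sigma I V)"
    using finI Ei(1) by blast
  ultimately have "tw_le (max t (c * (t0 + 1) - 1)) (Sigma I V) ?G"
    using tw_le_of_perfect_elim_order[of "Sigma I V" ?G ?P] by blast
  then show ?thesis
    using comp_E_mono[OF T(1)] by (rule tw_le_mono)
qed

lemma und_comp_E: "und (comp_E I E0 E R) = comp_E I (und E0) (\<lambda>i. und (E i)) R"
  unfolding und_def comp_E_def by blast

lemma graph_und: "graph dir V E \<Longrightarrow> graph False V (und E)"
  unfolding graph_def und_def sym_def by auto

theorem mainTheorem10:
  fixes dir :: bool
    and I :: "'i set" and E0 :: "('i \<times> 'i) set" and R0 :: "'i set"
    and V :: "'i \<Rightarrow> 'a set" and E :: "'i \<Rightarrow> ('a \<times> 'a) set" and R :: "'i \<Rightarrow> 'a set"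
    and c t t0 :: nat
  assumes "graph dir I E0"
    and "\<forall>i\<in>I. graph dir (V i) (E i)"
    and "R0 \<noteq> {}" and "bad dir I E0 R0"
    and "\<forall>i\<in>I. R i \<noteq> {} \<and> bad dir (V i) (E i) (R i)"
  shows "card (comp_V I V) = (\<Sum>i\<in>I. card (V i)) \<and>
    fvn dir (comp_V I V) (comp_E I E0 E R) \<ge> fvn dir I E0 + (\<Sum>i\<in>I. fvn dir (V i) (E i)) \<and>
    ((\<forall>i\<in>I. min_bad dir (V i) (E i) (R i)) \<longrightarrow>
       fvn dir (comp_V I V) (comp_E I E0 E R) = fvn dir I E0 + (\<Sum>i\<in>I. fvn dir (V i) (E i)) \<and>
       bad dir (comp_V I V) (comp_E I E0 E R) (\<Union>i\<in>R0. {i} \<times> R i)) \<and>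
    ((\<forall>i\<in>I. min_bad dir (V i) (E i) (R i)) \<and>
     (\<forall>i\<in>I. clique (und (E i)) (R i) \<and> card (R i) \<le> c \<and>
             chordal (V i) (und (E i)) \<and> tw_le t (V i) (und (E i))) \<and>
     tw_le t0 I (und E0) \<longrightarrow>
       tw_le (max t (c * (t0 + 1) - 1)) (comp_V I V) (und (comp_E I E0 E R)))"
proof -
  have finI: "finite I" and irrefl: "irrefl E0"
    using assms(1) unfolding graph_def irrefl_def by auto
  have finV: "\<forall>i\<in>I. finite (V i)"
    using assms(2) unfolding graph_def by blast
  have bad: "\<forall>i\<in>I. bad dir (V i) (E i) (R i)" and RV: "\<forall>i\<in>I. R i \<subseteq> V i"
    using assms(5) unfolding bad_def by blast+
  obtain F where F: "fvs dir (Sigma I V) (comp_E I E0 E R) F" "card F = fvn dir (Sigma I V) (comp_E I E0 E R)"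
    using min_fvs_exists[of "Sigma I V"] finI finV unfolding min_fvs_def by blast
  have lower: "fvn dir I E0 + (\<Sum>i\<in>I. fvn dir (V i) (E i)) \<le> fvn dir (Sigma I V) (comp_E I E0 E R)"
    using card_fvs_comp_ge(3)[OF finI finV bad F(1)] F(2) by simp
  have tight: "fvn dir (Sigma I V) (comp_E I E0 E R) = fvn dir I E0 + (\<Sum>i\<in>I. fvn dir (V i) (E i))"
    if "\<forall>i\<in>I. min_bad dir (V i) (E i) (R i)"
  proof (rule antisym)
    show "fvn dir (Sigma I V) (comp_E I E0 E R) \<le> fvn dir I E0 + (\<Sum>i\<in>I. fvn dir (V i) (E i))"
      using that assms(5) by (intro fvn_comp_le[OF finI finV irrefl]) blast
  qed (rule lower)
  have tw: "tw_le (max t (c * (t0 + 1) - 1)) (Sigma I V) (und (comp_E I E0 E R))"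
    if "\<forall>i\<in>I. clique (und (E i)) (R i) \<and> card (R i) \<le> c \<and>
             chordal (V i) (und (E i)) \<and> tw_le t (V i) (und (E i))" "tw_le t0 I (und E0)"
    unfolding und_comp_E
    by (rule tw_le_comp[OF graph_und[OF assms(1)] that(2)]) (use that assms(2) RV graph_und in blast)+
  show ?thesis
    unfolding comp_V_def
    using lower tight tw bad_comp[OF finI finV bad assms(4)] finI finV card_SigmaI by auto
qed

end
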